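(* Let $\mathbb{P}=\{(x,y)\in\mathbb{R}^2: x^2+y^2<1\}$ be the Poincaré disc model of the hyperbolic plane, with distance $d_{\mathbb{P}}(u,v)=\operatorname{arccosh}(1+\mathfrak{p}(u,v))$, where $\mathfrak{p}(u,v)=\frac{2\|u-v\|^2}{(1-\|u\|^2)(1-\|v\|^2)}$ and $\|\cdot\|$ is the Euclidean norm. Let $\lambda>0$, $\varepsilon>0$, and let $Q=Q(\lambda,\varepsilon)$ be the geodesic quadrilateral in $\mathbb{P}$ with vertices $(\pm a,\pm b)$ ($a,b>0$), where $a,b$ are chosen so that the hyperbolic distance between the midpoint of the upper side $U$ (from $(a,b)$ to $(-a,b)$) and the midpoint of the lower side $L$ (from $(a,-b)$ to $(-a,-b)$) is $\lambda$, and the hyperbolic distance between the midpoints of the other two sides (the left side and the right side) is $\varepsilon$. Then: (i) the unique shortest path in $Q$ from $L$ to $U$ is a segment of the $y$-axis; (ii) there exists $\alpha=\alpha(\lambda,\varepsilon)>0$ such that every path in $Q$ from $L$ to $U$ which meets either the left side or the right side of $Q$ has length at least $\lambda+\alpha$.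
   Context: In the Poincaré disc model the geodesics are the circular arcs (and diameters) orthogonal to the unit circle; a geodesic quadrilateral is the region bounded by four such geodesic segments. *)

theory Defs
  imports "HOL-Analysis.Analysis"
begin

text \<open>The plane R^2 is modelled by the type complex; (x,y) is Complex x y.\<close>

definition pdisc :: "complex set" where
  "pdisc = {z. cmod z < 1}"

definition pp :: "complex \<Rightarrow> complex \<Rightarrow> real" where
  "pp u v = 2 * (cmod (u - v))\<^sup>2 / ((1 - (cmod u)\<^sup>2) * (1 - (cmod v)\<^sup>2))"

definition pdist :: "complex \<Rightarrow> complex \<Rightarrow> real" where
  "pdist u v = arcosh (1 + pp u v)"

definition geoseg :: "complex \<Rightarrow> complex \<Rightarrow> complex set" where
  "geoseg u v = {z. \<exists>g. g 0 = u \<and> g 1 = v \<and> g ` {0..1} \<subseteq> pdisc \<and>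
      (\<forall>s\<in>{0..1}. \<forall>t\<in>{0..1}. pdist (g s) (g t) = \<bar>s - t\<bar> * pdist u v) \<and>
      z \<in> g ` {0..1}}"

definition hmid :: "complex \<Rightarrow> complex \<Rightarrow> complex" where
  "hmid u v = (THE m. m \<in> pdisc \<and> pdist u m = pdist u v / 2 \<and> pdist m v = pdist u v / 2)"

definition hlength :: "(real \<Rightarrow> complex) \<Rightarrow> ereal" where
  "hlength g = (SUP ts \<in> {ts. sorted ts \<and> set ts \<subseteq> {0..1}}.
      ereal (sum_list (map2 (\<lambda>s t. pdist (g s) (g t)) ts (tl ts))))"

definition upper_side :: "real \<Rightarrow> real \<Rightarrow> complex set" where
  "upper_side a b = geoseg (Complex a b) (Complex (-a) b)"
definition lower_side :: "real \<Rightarrow> real \<Rightarrow> complex set" where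
  "lower_side a b = geoseg (Complex a (-b)) (Complex (-a) (-b))"
definition right_side :: "real \<Rightarrow> real \<Rightarrow> complex set" where
  "right_side a b = geoseg (Complex a (-b)) (Complex a b)"
definition left_side :: "real \<Rightarrow> real \<Rightarrow> complex set" where
  "left_side a b = geoseg (Complex (-a) (-b)) (Complex (-a) b)"

definition quad_boundary :: "real \<Rightarrow> real \<Rightarrow> complex set" where
  "quad_boundary a b = upper_side a b \<union> lower_side a b \<union> left_side a b \<union> right_side a b"

definition quad :: "real \<Rightarrow> real \<Rightarrow> complex set" where
  "quad a b = quad_boundary a b \<union> inside (quad_boundary a b)"

definition LU_path :: "real \<Rightarrow> real \<Rightarrow> (real \<Rightarrow> complex) \<Rightarrow> bool" where
  "LU_path a b g \<longleftrightarrow> path g \<and> path_image g \<subseteq> quad a b \<and>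
     pathstart g \<in> lower_side a b \<and> pathfinish g \<in> upper_side a b"

end

theory Submission
  imports Defs
begin

(* The disc automorphisms z \<mapsto> (z - w)/(1 - conj w z) and the rotations preserve pp and hence
   pdist.  On the real diameter pdist x y = |hrad x - hrad y| with hrad x = ln ((1+x)/(1-x)),
   and the equality case of the triangle inequality shows that geodesic segments are images of
   real intervals under such automorphisms; in particular the hyperbolic midpoint of the image
   of [-\<sigma>, \<sigma>] is the image of 0.
   For the quadrilateral we solve b (1 + t\<^sup>2) = (1 + a\<^sup>2 + b\<^sup>2) t for t = side_param a b: the
   automorphism with parameter i t maps a real interval [-\<sigma>, \<sigma>] onto the lower side, whose
   midpoint is therefore -i t; the other sides are obtained by the symmetries -1 and \<plusminus>i.  Each
   side lies on a circle {side_circle t z = 0}; the four strict inequalities define an open set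
   whose frontier lies on the boundary, so it is contained in the inside of the boundary.
   Hence the axis segment from -i t to i t lies in Q and its hyperbolic length is
   lam = pdist (-i t) (i t).  An explicit formula shows that this is the least distance between
   a point of L and a point of U, attained only at the two midpoints.  Since the length of a
   path dominates the length of any inscribed polygon, (i) follows, the uniqueness using the
   equality case of the triangle inequality on the imaginary axis.  For (ii), the function
   (x, z, y) \<mapsto> pdist x z + pdist z y is continuous on the compact set L \<times> (left \<union> right) \<times> U,
   and its minimum exceeds lam because the side points are off the axis. *)

definition mobius :: "complex \<Rightarrow> complex \<Rightarrow> complex" where
  "mobius w z = (z - w) / (1 - cnj w * z)"

(* The basic identity behind all invariance properties of the disc automorphisms. *)
lemma mobius_denom_identity:
  "(cmod (1 - cnj w * z))\<^sup>2 - (cmod (z - w))\<^sup>2 = (1 - (cmod w)\<^sup>2) * (1 - (cmod z)\<^sup>2)"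
  unfolding cmod_power2 by (simp add: power2_eq_square algebra_simps)

lemma mobius_denom_nonzero:
  assumes "cmod w < 1" "cmod z \<le> 1"
  shows "1 - cnj w * z \<noteq> 0"
proof
  assume "1 - cnj w * z = 0"
  hence "cmod w * cmod z = 1" by (metis complex_mod_cnj norm_mult norm_one right_minus_eq)
  moreover have "cmod w * cmod z < 1"
    using assms by (metis norm_ge_zero order_le_less_trans less_eq_real_def
        mult_strict_right_mono mult_less_cancel_right1 not_le)
  ultimately show False by simp
qed

lemma mobius_norm_defect:
  assumes "cmod w < 1" "cmod z \<le> 1"
  shows "1 - (cmod (mobius w z))\<^sup>2
           = (1 - (cmod w)\<^sup>2) * (1 - (cmod z)\<^sup>2) / (cmod (1 - cnj w * z))\<^sup>2"
proof -
  have nz: "cmod (1 - cnj w * z) \<noteq> 0" using mobius_denom_nonzero[OF assms] by simp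
  have "(cmod (mobius w z))\<^sup>2 = (cmod (z - w))\<^sup>2 / (cmod (1 - cnj w * z))\<^sup>2"
    by (simp add: mobius_def norm_divide power_divide)
  thus ?thesis using mobius_denom_identity[of w z] nz by (simp add: field_simps)
qed

lemma mobius_in_disc:
  assumes "cmod w < 1" "cmod z < 1"
  shows "cmod (mobius w z) < 1"
proof -
  have nz: "cmod (1 - cnj w * z) \<noteq> 0" using mobius_denom_nonzero[of w z] assms by simp
  have "(cmod w)\<^sup>2 < 1" "(cmod z)\<^sup>2 < 1" using assms by (simp_all add: abs_square_less_1)
  hence "1 - (cmod (mobius w z))\<^sup>2 > 0" using mobius_norm_defect[of w z] assms nz by simp
  thus ?thesis by (simp add: abs_square_less_1)
qed

lemma mobius_inverse:
  assumes "cmod w < 1" "cmod z \<le> 1"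
  shows "mobius (-w) (mobius w z) = z"
proof -
  have d: "1 - cnj w * z \<noteq> 0" using mobius_denom_nonzero assms by auto
  have e: "1 - cnj w * w \<noteq> 0" using mobius_denom_nonzero[of w w] assms by auto
  have num: "mobius w z + w = z * (1 - cnj w * w) / (1 - cnj w * z)"
    using d by (simp add: mobius_def field_simps)
  have den: "1 + cnj w * mobius w z = (1 - cnj w * w) / (1 - cnj w * z)"
    using d by (simp add: mobius_def field_simps)
  have "mobius (-w) (mobius w z) = (mobius w z + w) / (1 + cnj w * mobius w z)"
    by (simp add: mobius_def)
  also have "\<dots> = z" unfolding num den using d e by simp
  finally show ?thesis .
qed

lemma mobius_self [simp]: "mobius w w = 0"
  by (simp add: mobius_def)

lemma mobius_real: "mobius (of_real p) (of_real x) = of_real ((x - p) / (1 - p * x))"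
  by (simp add: mobius_def)

lemma mobius_imag_real:
  "mobius (Complex 0 t) (of_real x)
     = Complex (x * (1 - t\<^sup>2) / (1 + t\<^sup>2 * x\<^sup>2)) (- t * (1 + x\<^sup>2) / (1 + t\<^sup>2 * x\<^sup>2))"
proof -
  have "1 + t\<^sup>2 * x\<^sup>2 \<noteq> 0" by (smt (verit) zero_le_power2 mult_nonneg_nonneg)
  thus ?thesis unfolding mobius_def
    by (simp add: complex_eq_iff Re_divide Im_divide power2_eq_square field_simps)
qed

lemma pp_mobius:
  assumes "cmod w < 1" "cmod z < 1" "cmod u < 1"
  shows "pp (mobius w z) (mobius w u) = pp z u"
proof -
  define Dz where "Dz = cmod (1 - cnj w * z)"
  define Du where "Du = cmod (1 - cnj w * u)"
  define k where "k = 1 - (cmod w)\<^sup>2"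
  have Dz: "Dz \<noteq> 0" and Du: "Du \<noteq> 0"
    using mobius_denom_nonzero[of w z] mobius_denom_nonzero[of w u] assms
    by (simp_all add: Dz_def Du_def)
  have sq: "(cmod w)\<^sup>2 < 1" "(cmod z)\<^sup>2 < 1" "(cmod u)\<^sup>2 < 1"
    using assms by (simp_all add: abs_square_less_1)
  have "cmod (1 - cnj w * w) = k"
    using sq(1) unfolding k_def complex_norm_square[symmetric] mult.commute[of "cnj w"]
    by (metis abs_of_nonneg complex_mod_mult_cnj diff_ge_0_iff_ge less_eq_real_def norm_of_real
        of_real_1 of_real_diff)
  moreover have "mobius w z - mobius w u
                   = (z - u) * (1 - cnj w * w) / ((1 - cnj w * z) * (1 - cnj w * u))"
    using mobius_denom_nonzero[of w z] mobius_denom_nonzero[of w u] assms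
    by (simp add: mobius_def field_simps)
  ultimately have diff: "(cmod (mobius w z - mobius w u))\<^sup>2 = (cmod (z - u))\<^sup>2 * k\<^sup>2 / (Dz\<^sup>2 * Du\<^sup>2)"
    by (simp add: norm_divide norm_mult power_divide power_mult_distrib Dz_def Du_def)
  have cancel: "2 * (X * k\<^sup>2 / (P * Q)) / ((k * Y / P) * (k * V / Q)) = 2 * X / (Y * V)"
    if "k \<noteq> 0" "Y \<noteq> 0" "V \<noteq> 0" "P \<noteq> 0" "Q \<noteq> 0" for X Y V P Q :: real
    using that by (simp add: field_simps power2_eq_square)
  have "k \<noteq> 0" "1 - (cmod z)\<^sup>2 \<noteq> 0" "1 - (cmod u)\<^sup>2 \<noteq> 0" using sq by (auto simp: k_def)
  thus ?thesis
    unfolding pp_def diff mobius_norm_defect[OF assms(1) less_imp_le[OF assms(2)]]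
      mobius_norm_defect[OF assms(1) less_imp_le[OF assms(3)]] k_def[symmetric]
      Dz_def[symmetric] Du_def[symmetric]
    using Dz Du by (intro cancel) auto
qed

lemma pdist_mobius:
  assumes "cmod w < 1" "cmod z < 1" "cmod u < 1"
  shows "pdist (mobius w z) (mobius w u) = pdist z u"
  using pp_mobius[OF assms] by (simp add: pdist_def)

lemma pdist_rotation:
  assumes "cmod r = 1"
  shows "pdist (r * z) (r * u) = pdist z u"
proof -
  have "r * z - r * u = r * (z - u)" by (simp add: algebra_simps)
  thus ?thesis using assms by (simp add: pdist_def pp_def norm_mult)
qed

lemma pdist_sym: "pdist z u = pdist u z"
  by (simp add: pdist_def pp_def norm_minus_commute mult.commute)

lemma pp_nonneg:
  assumes "cmod z < 1" "cmod u < 1"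
  shows "pp z u \<ge> 0"
proof -
  have "(cmod z)\<^sup>2 < 1" "(cmod u)\<^sup>2 < 1" using assms by (simp_all add: abs_square_less_1)
  thus ?thesis by (simp add: pp_def)
qed

lemma one_plus_pp:
  assumes "cmod z < 1" "cmod u < 1"
  shows "1 + pp z u = ((1 + (cmod z)\<^sup>2) * (1 + (cmod u)\<^sup>2) - 4 * (Re z * Re u + Im z * Im u))
                      / ((1 - (cmod z)\<^sup>2) * (1 - (cmod u)\<^sup>2))"
proof -
  have "(cmod z)\<^sup>2 < 1" "(cmod u)\<^sup>2 < 1" using assms by (simp_all add: abs_square_less_1)
  hence nz: "(1 - (cmod z)\<^sup>2) * (1 - (cmod u)\<^sup>2) \<noteq> 0" by simp
  have "(cmod (z - u))\<^sup>2 = (cmod z)\<^sup>2 + (cmod u)\<^sup>2 - 2 * (Re z * Re u + Im z * Im u)"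
    unfolding cmod_power2 by (simp add: power2_eq_square algebra_simps)
  thus ?thesis unfolding pp_def using nz by (simp add: field_simps)
qed

lemma pdist_continuous: "continuous_on (pdisc \<times> pdisc) (\<lambda>p. pdist (fst p) (snd p))"
  unfolding pdist_def
proof (rule continuous_on_compose2[OF continuous_on_arcosh[of "{1..}"]])
  have "(1 - (cmod (fst p))\<^sup>2) * (1 - (cmod (snd p))\<^sup>2) \<noteq> 0" if "p \<in> pdisc \<times> pdisc" for p
  proof -
    have "(cmod (fst p))\<^sup>2 < 1" "(cmod (snd p))\<^sup>2 < 1"
      using that by (auto simp: pdisc_def abs_square_less_1)
    thus ?thesis by simp
  qed
  thus "continuous_on (pdisc \<times> pdisc) (\<lambda>p. 1 + pp (fst p) (snd p))"
    unfolding pp_def by (intro continuous_intros) auto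
  show "(\<lambda>p. 1 + pp (fst p) (snd p)) ` (pdisc \<times> pdisc) \<subseteq> {1..}"
    using pp_nonneg by (auto simp: pdisc_def)
qed simp

(* Hyperbolic distance from the origin to the real point x, i.e. 2 artanh x. *)
definition hrad :: "real \<Rightarrow> real" where
  "hrad x = ln ((1 + x) / (1 - x))"

(* Its inverse, tanh (y / 2). *)
definition hrad_inv :: "real \<Rightarrow> real" where
  "hrad_inv y = (exp y - 1) / (exp y + 1)"

lemma hrad_inv_bound: "\<bar>hrad_inv y\<bar> < 1"
proof -
  have "exp y + 1 > 0" by (simp add: add_pos_pos)
  thus ?thesis by (simp add: hrad_inv_def abs_less_iff divide_less_eq less_divide_eq)
qed

lemma hrad_hrad_inv [simp]: "hrad (hrad_inv y) = y"
proof -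
  have "exp y + 1 \<noteq> 0" by (smt (verit) exp_gt_zero)
  hence "(1 + hrad_inv y) / (1 - hrad_inv y) = exp y" by (simp add: hrad_inv_def field_simps)
  thus ?thesis by (simp add: hrad_def)
qed

lemma hrad_inv_hrad:
  assumes "\<bar>x\<bar> < 1"
  shows "hrad_inv (hrad x) = x"
proof -
  have "exp (hrad x) = (1 + x) / (1 - x)" using assms by (simp add: hrad_def)
  moreover have "((1 + x) / (1 - x) - 1) / ((1 + x) / (1 - x) + 1) = x"
    using assms by (simp add: field_simps)
  ultimately show ?thesis by (simp add: hrad_inv_def)
qed

lemma hrad_less_iff:
  assumes "\<bar>x\<bar> < 1" "\<bar>y\<bar> < 1"
  shows "hrad x < hrad y \<longleftrightarrow> x < y"
proof -
  have "(1 + x) / (1 - x) < (1 + y) / (1 - y) \<longleftrightarrow> x < y" using assms by (simp add: field_simps)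
  thus ?thesis using assms by (simp add: hrad_def)
qed

lemma hrad_le_iff:
  assumes "\<bar>x\<bar> < 1" "\<bar>y\<bar> < 1"
  shows "hrad x \<le> hrad y \<longleftrightarrow> x \<le> y"
  using hrad_less_iff[OF assms(2,1)] by (simp add: not_less[symmetric])

lemma hrad_0 [simp]: "hrad 0 = 0"
  by (simp add: hrad_def)

lemma hrad_minus:
  assumes "\<bar>x\<bar> < 1"
  shows "hrad (-x) = - hrad x"
  using assms by (simp add: hrad_def ln_div)

lemma cosh_hrad_diff:
  assumes "\<bar>x\<bar> < 1" "\<bar>y\<bar> < 1"
  shows "cosh (hrad x - hrad y) = ((1 + x\<^sup>2) * (1 + y\<^sup>2) - 4 * x * y) / ((1 - x\<^sup>2) * (1 - y\<^sup>2))"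
proof -
  define P where "P = (1 + x) * (1 - y)"
  define Q where "Q = (1 - x) * (1 + y)"
  have PQ: "P > 0" "Q > 0" using assms by (auto simp: P_def Q_def)
  have "exp (hrad x - hrad y) = P / Q" "exp (- (hrad x - hrad y)) = Q / P"
    using assms by (simp_all add: hrad_def exp_diff P_def Q_def field_simps)
  hence "cosh (hrad x - hrad y) = (P / Q + Q / P) / 2" by (simp add: cosh_def)
  also have "\<dots> = (P\<^sup>2 + Q\<^sup>2) / (2 * (P * Q))" using PQ by (simp add: field_simps power2_eq_square)
  also have "P\<^sup>2 + Q\<^sup>2 = 2 * ((1 + x\<^sup>2) * (1 + y\<^sup>2) - 4 * x * y)"
    by (simp add: P_def Q_def algebra_simps power2_eq_square)
  also have "P * Q = (1 - x\<^sup>2) * (1 - y\<^sup>2)" by (simp add: P_def Q_def algebra_simps power2_eq_square)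
  finally show ?thesis by (metis mult_divide_mult_cancel_left zero_neq_numeral)
qed

lemma arcosh_cosh_abs: "arcosh (cosh (x :: real)) = \<bar>x\<bar>"
  by (metis abs_ge_zero arcosh_cosh_real cosh_real_abs)

lemma arcosh_mono: "1 \<le> (x :: real) \<Longrightarrow> x \<le> y \<Longrightarrow> arcosh x \<le> arcosh y"
  using arcosh_less_iff_real[of y x] by linarith

lemma pdist_real:
  assumes "\<bar>x\<bar> < 1" "\<bar>y\<bar> < 1"
  shows "pdist (of_real x) (of_real y) = \<bar>hrad x - hrad y\<bar>"
proof -
  have "1 + pp (of_real x) (of_real y) = cosh (hrad x - hrad y)"
    using one_plus_pp[of "of_real x" "of_real y"] assms cosh_hrad_diff[OF assms]
    by (simp add: power2_eq_square)
  thus ?thesis by (simp add: pdist_def arcosh_cosh_abs)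
qed

lemma pdist_imag:
  assumes "\<bar>y1\<bar> < 1" "\<bar>y2\<bar> < 1"
  shows "pdist (Complex 0 y1) (Complex 0 y2) = \<bar>hrad y1 - hrad y2\<bar>"
proof -
  have "Complex 0 y = \<i> * of_real y" for y by (simp add: complex_eq_iff)
  thus ?thesis using pdist_rotation[of \<i>] pdist_real[OF assms] by simp
qed

lemma pdist_mobius_real:
  assumes "cmod w < 1" "\<bar>x\<bar> < 1" "\<bar>y\<bar> < 1"
  shows "pdist (mobius w (of_real x)) (mobius w (of_real y)) = \<bar>hrad x - hrad y\<bar>"
  using pdist_mobius[of w "of_real x" "of_real y"] pdist_real[of x y] assms by simp

lemma pdist_origin:
  assumes "cmod w < 1"
  shows "pdist 0 w = hrad (cmod w)"
proof -
  have "pdist 0 w = pdist (of_real 0) (of_real (cmod w))" by (simp add: pdist_def pp_def)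
  also have "\<dots> = \<bar>hrad 0 - hrad (cmod w)\<bar>" using assms by (intro pdist_real) auto
  also have "\<dots> = hrad (cmod w)" using hrad_le_iff[of 0 "cmod w"] assms by auto
  finally show ?thesis .
qed

(* The distance between two points is at least the difference of their distances from 0;
   this is Cauchy-Schwarz for the inner product in the formula for pp. *)
lemma pdist_ge_radius_diff:
  assumes "cmod z < 1" "cmod w < 1"
  shows "pdist z w \<ge> \<bar>hrad (cmod w) - hrad (cmod z)\<bar>"
proof -
  have r: "(cmod z)\<^sup>2 < 1" "(cmod w)\<^sup>2 < 1" using assms by (simp_all add: abs_square_less_1)
  have "Re z * Re w + Im z * Im w \<le> cmod z * cmod w"
    using norm_cauchy_schwarz[of z w] by (simp add: inner_complex_def)
  hence "(1 + (cmod w)\<^sup>2) * (1 + (cmod z)\<^sup>2) - 4 * cmod w * cmod z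
       \<le> (1 + (cmod z)\<^sup>2) * (1 + (cmod w)\<^sup>2) - 4 * (Re z * Re w + Im z * Im w)"
    by (simp add: algebra_simps)
  hence "((1 + (cmod w)\<^sup>2) * (1 + (cmod z)\<^sup>2) - 4 * cmod w * cmod z) / ((1 - (cmod w)\<^sup>2) * (1 - (cmod z)\<^sup>2))
       \<le> ((1 + (cmod z)\<^sup>2) * (1 + (cmod w)\<^sup>2) - 4 * (Re z * Re w + Im z * Im w))
           / ((1 - (cmod w)\<^sup>2) * (1 - (cmod z)\<^sup>2))"
    by (rule divide_right_mono) (use r in simp)
  hence "cosh (hrad (cmod w) - hrad (cmod z)) \<le> 1 + pp z w"
    using cosh_hrad_diff[of "cmod w" "cmod z"] one_plus_pp[OF assms] assms by (simp add: mult.commute)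
  hence "arcosh (cosh (hrad (cmod w) - hrad (cmod z))) \<le> arcosh (1 + pp z w)"
    by (intro arcosh_mono) (auto simp: cosh_real_ge_1)
  thus ?thesis by (simp add: pdist_def arcosh_cosh_abs)
qed

(* The triangle inequality, reduced to the origin by an automorphism. *)
lemma pdist_triangle:
  assumes "cmod u < 1" "cmod z < 1" "cmod v < 1"
  shows "pdist u v \<le> pdist u z + pdist z v"
proof -
  have "pdist u z = pdist 0 (mobius u z)" "pdist u v = pdist 0 (mobius u v)"
    using pdist_mobius[of u] assms by (metis mobius_self)+
  moreover have "pdist z v = pdist (mobius u z) (mobius u v)" using pdist_mobius assms by simp
  moreover have "cmod (mobius u z) < 1" "cmod (mobius u v) < 1" using assms mobius_in_disc by auto
  ultimately show ?thesis using pdist_ge_radius_diff[of "mobius u z" "mobius u v"] pdist_origin by auto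
qed

(* Equality in the triangle inequality for 0, z and a positive real s: then z lies on the
   nonnegative real axis, since otherwise Cauchy-Schwarz is strict. *)
lemma triangle_equality_origin:
  assumes "cmod z < 1" "s < 1" "s > 0"
    and le: "pdist 0 z + pdist z (of_real s) \<le> pdist 0 (of_real s)"
  shows "Im z = 0 \<and> Re z \<ge> 0"
proof (rule ccontr)
  assume ne: "\<not> (Im z = 0 \<and> Re z \<ge> 0)"
  have "Re z \<noteq> cmod z"
  proof
    assume e: "Re z = cmod z"
    hence "Im z = 0" using cmod_power2[of z] by simp
    thus False using ne e by simp
  qed
  hence lt: "Re z < cmod z" using complex_Re_le_cmod[of z] by simp
  have sc: "cmod (of_real s) < 1" using assms by simp
  have r: "(cmod z)\<^sup>2 < 1" "s\<^sup>2 < 1" using assms by (simp_all add: abs_square_less_1)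
  have "4 * s * Re z < 4 * s * cmod z" using lt assms by simp
  hence "(1 + s\<^sup>2) * (1 + (cmod z)\<^sup>2) - 4 * s * cmod z < (1 + (cmod z)\<^sup>2) * (1 + s\<^sup>2) - 4 * (Re z * s)"
    by (simp add: algebra_simps)
  hence "((1 + s\<^sup>2) * (1 + (cmod z)\<^sup>2) - 4 * s * cmod z) / ((1 - s\<^sup>2) * (1 - (cmod z)\<^sup>2))
       < ((1 + (cmod z)\<^sup>2) * (1 + s\<^sup>2) - 4 * (Re z * s)) / ((1 - s\<^sup>2) * (1 - (cmod z)\<^sup>2))"
    by (rule divide_strict_right_mono) (use r in simp)
  hence "cosh (hrad s - hrad (cmod z)) < 1 + pp z (of_real s)"
    using cosh_hrad_diff[of s "cmod z"] one_plus_pp[OF assms(1) sc] assms by (simp add: mult.commute)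
  hence "arcosh (cosh (hrad s - hrad (cmod z))) < arcosh (1 + pp z (of_real s))"
    using pp_nonneg[OF assms(1) sc] by (subst arcosh_less_iff_real) (auto simp: cosh_real_ge_1)
  hence "pdist z (of_real s) > \<bar>hrad s - hrad (cmod z)\<bar>" by (simp add: pdist_def arcosh_cosh_abs)
  moreover have "pdist 0 z = hrad (cmod z)" "pdist 0 (of_real s) = hrad s"
    using pdist_origin assms by auto
  ultimately show False using le by auto
qed

(* Equality in the triangle inequality for two real points p < q: the middle point lies on
   the real segment [p, q].  Reduced to the previous lemma by the automorphism moving p to 0. *)
lemma triangle_equality_real:
  assumes "\<bar>p\<bar> < 1" "\<bar>q\<bar> < 1" "p < q" "cmod z < 1"
    and le: "pdist (of_real p) z + pdist z (of_real q) \<le> pdist (of_real p) (of_real q)"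
  shows "Im z = 0 \<and> p \<le> Re z \<and> Re z \<le> q"
proof -
  define s where "s = (q - p) / (1 - p * q)"
  have pq: "1 - p * q > 0"
    using assms by (smt (verit, best) abs_less_iff mult_less_cancel_left1 mult_le_cancel_left1
        mult_minus_left mult_minus_right)
  have "(1 + p) * (1 - q) > 0" using assms by (intro mult_pos_pos) auto
  hence s: "0 < s" "s < 1" using pq assms by (simp_all add: s_def algebra_simps)
  have pc: "cmod (of_real p) < 1" using assms by auto
  define \<zeta> where "\<zeta> = mobius (of_real p) z"
  have zc: "cmod \<zeta> < 1" using mobius_in_disc pc assms by (simp add: \<zeta>_def)
  have "mobius (of_real p) (of_real q) = of_real s" by (simp add: mobius_real s_def)
  hence "pdist 0 \<zeta> + pdist \<zeta> (of_real s) \<le> pdist 0 (of_real s)"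
    using le pdist_mobius[of "of_real p"] pc assms unfolding \<zeta>_def by (metis mobius_self norm_of_real)
  hence "Im \<zeta> = 0" using triangle_equality_origin[OF zc s(2,1)] by auto
  hence "\<zeta> = of_real (Re \<zeta>)" by (simp add: complex_eq_iff)
  moreover have "z = mobius (- of_real p) \<zeta>"
    using mobius_inverse[OF pc, of z] assms by (simp add: \<zeta>_def)
  ultimately have "z = mobius (of_real (-p)) (of_real (Re \<zeta>))" by simp
  hence zr: "z = of_real (Re z)" unfolding mobius_real by (simp add: complex_eq_iff)
  have xa: "\<bar>Re z\<bar> < 1" using assms zr by (metis norm_of_real)
  have "\<bar>hrad p - hrad (Re z)\<bar> + \<bar>hrad (Re z) - hrad q\<bar> \<le> \<bar>hrad p - hrad q\<bar>"
    using le zr pdist_real[of p "Re z"] pdist_real[of "Re z" q] pdist_real[of p q] assms xa by metis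
  moreover have "hrad p < hrad q" using hrad_less_iff assms by auto
  ultimately have "hrad p \<le> hrad (Re z) \<and> hrad (Re z) \<le> hrad q" by linarith
  hence "p \<le> Re z \<and> Re z \<le> q" using hrad_le_iff assms xa by auto
  moreover have "Im z = 0" using zr by (metis Im_complex_of_real)
  ultimately show ?thesis by simp
qed

lemma triangle_equality_imag:
  assumes "0 < t" "t < 1" "cmod z < 1"
    and le: "pdist (Complex 0 (-t)) z + pdist z (Complex 0 t) \<le> pdist (Complex 0 (-t)) (Complex 0 t)"
  shows "Re z = 0 \<and> -t \<le> Im z \<and> Im z \<le> t"
proof -
  have "- \<i> * Complex 0 (-t) = of_real (-t)" "- \<i> * Complex 0 t = of_real t"
    by (simp_all add: complex_eq_iff)
  hence "pdist (of_real (-t)) (- \<i> * z) + pdist (- \<i> * z) (of_real t) \<le> pdist (of_real (-t)) (of_real t)"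
    using le pdist_rotation[of "- \<i>"] by (metis norm_minus_cancel norm_ii)
  moreover have "cmod (- \<i> * z) < 1" using assms by (simp add: norm_mult)
  ultimately have "Im (- \<i> * z) = 0 \<and> -t \<le> Re (- \<i> * z) \<and> Re (- \<i> * z) \<le> t"
    using triangle_equality_real[of "-t" t "- \<i> * z"] assms by auto
  thus ?thesis by simp
qed

lemma geoseg_reverse_subset: "geoseg u v \<subseteq> geoseg v u"
proof
  fix z assume "z \<in> geoseg u v"
  then obtain g where g: "g 0 = u" "g 1 = v" "g ` {0..1} \<subseteq> pdisc"
    "\<forall>s\<in>{0..1}. \<forall>t\<in>{0..1}. pdist (g s) (g t) = \<bar>s - t\<bar> * pdist u v" "z \<in> g ` {0..1}"
    unfolding geoseg_def by blast
  define h where "h = (\<lambda>s. g (1 - s))"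
  have "(\<lambda>s. 1 - s) ` {0..1::real} = {0..1}"
  proof
    show "{0..1} \<subseteq> (\<lambda>s. 1 - s) ` {0..1::real}"
    proof
      fix x :: real assume "x \<in> {0..1}"
      hence "1 - x \<in> {0..1}" "x = 1 - (1 - x)" by auto
      thus "x \<in> (\<lambda>s. 1 - s) ` {0..1}" by blast
    qed
  qed auto
  hence "h ` {0..1} = g ` {0..1}" unfolding h_def by (metis image_image)
  moreover have "\<forall>s\<in>{0..1}. \<forall>t\<in>{0..1}. pdist (h s) (h t) = \<bar>s - t\<bar> * pdist v u"
    using g(4) by (simp add: h_def pdist_sym abs_minus_commute)
  moreover have "h 0 = v" "h 1 = u" using g by (simp_all add: h_def)
  ultimately show "z \<in> geoseg v u"
    unfolding geoseg_def using g(3,5) by (intro CollectI exI[of _ h]) simp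
qed

lemma geoseg_sym: "geoseg u v = geoseg v u"
  using geoseg_reverse_subset by blast

lemma geoseg_in_disc: "geoseg u v \<subseteq> pdisc"
  by (auto simp: geoseg_def)

lemma geoseg_isometry_subset:
  assumes f: "\<And>z. z \<in> pdisc \<Longrightarrow> f z \<in> pdisc"
    and iso: "\<And>x y. x \<in> pdisc \<Longrightarrow> y \<in> pdisc \<Longrightarrow> pdist (f x) (f y) = pdist x y"
    and uv: "u \<in> pdisc" "v \<in> pdisc"
  shows "f ` geoseg u v \<subseteq> geoseg (f u) (f v)"
proof
  fix y assume "y \<in> f ` geoseg u v"
  then obtain z where z: "z \<in> geoseg u v" "y = f z" by blast
  then obtain g where g: "g 0 = u" "g 1 = v" "g ` {0..1} \<subseteq> pdisc"
    "\<forall>s\<in>{0..1}. \<forall>t\<in>{0..1}. pdist (g s) (g t) = \<bar>s - t\<bar> * pdist u v" "z \<in> g ` {0..1}"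
    unfolding geoseg_def by blast
  have "(f \<circ> g) 0 = f u" "(f \<circ> g) 1 = f v" using g by auto
  moreover have "(f \<circ> g) ` {0..1} \<subseteq> pdisc" using g(3) f by auto
  moreover have "\<forall>s\<in>{0..1}. \<forall>t\<in>{0..1}. pdist ((f \<circ> g) s) ((f \<circ> g) t) = \<bar>s - t\<bar> * pdist (f u) (f v)"
    using g(3,4) iso uv by (auto simp: image_subset_iff)
  moreover have "y \<in> (f \<circ> g) ` {0..1}" using z g(5) by auto
  ultimately show "y \<in> geoseg (f u) (f v)" unfolding geoseg_def by blast
qed

(* An isometric bijection of the disc maps geodesic segments onto geodesic segments; the
   reverse inclusion is the previous lemma for the inverse map. *)
lemma geoseg_isometry_image:
  assumes f: "\<And>z. z \<in> pdisc \<Longrightarrow> f z \<in> pdisc" and f': "\<And>z. z \<in> pdisc \<Longrightarrow> f' z \<in> pdisc"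
    and inv1: "\<And>z. z \<in> pdisc \<Longrightarrow> f' (f z) = z" and inv2: "\<And>z. z \<in> pdisc \<Longrightarrow> f (f' z) = z"
    and iso: "\<And>x y. x \<in> pdisc \<Longrightarrow> y \<in> pdisc \<Longrightarrow> pdist (f x) (f y) = pdist x y"
    and uv: "u \<in> pdisc" "v \<in> pdisc"
  shows "geoseg (f u) (f v) = f ` geoseg u v"
proof
  show "f ` geoseg u v \<subseteq> geoseg (f u) (f v)" by (rule geoseg_isometry_subset[OF f iso uv])
  have iso': "pdist (f' x) (f' y) = pdist x y" if "x \<in> pdisc" "y \<in> pdisc" for x y
    using iso[OF f'[OF that(1)] f'[OF that(2)]] inv2 that by simp
  have "f' ` geoseg (f u) (f v) \<subseteq> geoseg (f' (f u)) (f' (f v))"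
    by (rule geoseg_isometry_subset[OF f' iso' f[OF uv(1)] f[OF uv(2)]])
  hence inverse_image: "f' ` geoseg (f u) (f v) \<subseteq> geoseg u v" using inv1 uv by simp
  show "geoseg (f u) (f v) \<subseteq> f ` geoseg u v"
  proof
    fix y assume y: "y \<in> geoseg (f u) (f v)"
    hence "y \<in> pdisc" using geoseg_in_disc by auto
    hence "y = f (f' y)" by (simp add: inv2)
    thus "y \<in> f ` geoseg u v" using inverse_image y by blast
  qed
qed

lemma geoseg_mobius:
  assumes "cmod w < 1" "u \<in> pdisc" "v \<in> pdisc"
  shows "geoseg (mobius w u) (mobius w v) = mobius w ` geoseg u v"
proof (rule geoseg_isometry_image[where f' = "mobius (-w)"])
  have w': "cmod (-w) < 1" using assms by simp
  show "\<And>z. z \<in> pdisc \<Longrightarrow> mobius w z \<in> pdisc" using assms mobius_in_disc by (simp add: pdisc_def)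
  show "\<And>z. z \<in> pdisc \<Longrightarrow> mobius (-w) z \<in> pdisc" using w' mobius_in_disc by (simp add: pdisc_def)
  show "\<And>z. z \<in> pdisc \<Longrightarrow> mobius (-w) (mobius w z) = z" using assms mobius_inverse by (simp add: pdisc_def)
  show "\<And>z. z \<in> pdisc \<Longrightarrow> mobius w (mobius (-w) z) = z" using w' mobius_inverse[of "-w"] by (simp add: pdisc_def)
  show "\<And>x y. x \<in> pdisc \<Longrightarrow> y \<in> pdisc \<Longrightarrow> pdist (mobius w x) (mobius w y) = pdist x y"
    using assms pdist_mobius by (simp add: pdisc_def)
qed (use assms in auto)

lemma geoseg_rotation:
  assumes "cmod r = 1" "u \<in> pdisc" "v \<in> pdisc"
  shows "geoseg (r * u) (r * v) = (\<lambda>z. r * z) ` geoseg u v"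
proof -
  have rr: "cnj r * r = 1" using assms(1) by (metis complex_norm_square mult.commute of_real_1 power_one)
  show ?thesis
  proof (rule geoseg_isometry_image[where f' = "\<lambda>z. cnj r * z"])
    show "\<And>z. z \<in> pdisc \<Longrightarrow> r * z \<in> pdisc" "\<And>z. z \<in> pdisc \<Longrightarrow> cnj r * z \<in> pdisc"
      using assms by (simp_all add: pdisc_def norm_mult)
    show "\<And>z. cnj r * (r * z) = z" "\<And>z. r * (cnj r * z) = z"
      by (simp_all add: mult.assoc[symmetric] rr mult.commute[of r])
    show "\<And>x y. pdist (r * x) (r * y) = pdist x y" using pdist_rotation[OF assms(1)] by simp
  qed (use assms in auto)
qed

(* Points of a real geodesic segment are real, by the equality case of the triangle inequality. *)
lemma geoseg_real_subset:
  assumes "\<bar>p\<bar> < 1" "\<bar>q\<bar> < 1" "p < q"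
  shows "geoseg (of_real p) (of_real q) \<subseteq> complex_of_real ` {p..q}"
proof
  fix z assume "z \<in> geoseg (of_real p) (of_real q)"
  then obtain g where g: "g 0 = of_real p" "g 1 = of_real q" "g ` {0..1} \<subseteq> pdisc"
    "\<forall>s\<in>{0..1}. \<forall>t\<in>{0..1}. pdist (g s) (g t) = \<bar>s - t\<bar> * pdist (of_real p) (of_real q)"
    "z \<in> g ` {0..1}"
    unfolding geoseg_def by blast
  then obtain s where s: "s \<in> {0..1}" "z = g s" by blast
  have "pdist (g 0) (g s) + pdist (g s) (g 1) = pdist (of_real p) (of_real q)"
    using g(4) s(1) by (auto simp: algebra_simps)
  moreover have "cmod z < 1" using g(3) s by (auto simp: pdisc_def image_subset_iff)
  ultimately have "Im z = 0 \<and> p \<le> Re z \<and> Re z \<le> q"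
    using triangle_equality_real assms g s by (metis order_refl)
  thus "z \<in> complex_of_real ` {p..q}" by (auto simp: image_iff complex_eq_iff intro!: bexI[of _ "Re z"])
qed

(* Conversely a real interval is a geodesic segment: it is parametrised proportionally to
   hyperbolic arc length by interpolating the radii. *)
lemma real_interval_subset_geoseg:
  assumes "\<bar>p\<bar> < 1" "\<bar>q\<bar> < 1" "p < q"
  shows "complex_of_real ` {p..q} \<subseteq> geoseg (of_real p) (of_real q)"
proof
  fix z assume "z \<in> complex_of_real ` {p..q}"
  then obtain x where x: "x \<in> {p..q}" "z = of_real x" by blast
  have xa: "\<bar>x\<bar> < 1" using x assms by auto
  define g where "g = (\<lambda>s. complex_of_real (hrad_inv ((1 - s) * hrad p + s * hrad q)))"
  have ends: "g 0 = of_real p" "g 1 = of_real q" using hrad_inv_hrad assms by (simp_all add: g_def)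
  have disc: "g ` {0..1} \<subseteq> pdisc" using hrad_inv_bound by (auto simp: g_def pdisc_def)
  have "pdist (g s) (g t) = \<bar>s - t\<bar> * pdist (of_real p) (of_real q)" for s t
  proof -
    have "pdist (g s) (g t) = \<bar>((1 - s) * hrad p + s * hrad q) - ((1 - t) * hrad p + t * hrad q)\<bar>"
      unfolding g_def by (subst pdist_real) (auto simp: hrad_inv_bound)
    also have "\<dots> = \<bar>s - t\<bar> * \<bar>hrad p - hrad q\<bar>" by (simp add: abs_mult[symmetric] algebra_simps)
    finally show ?thesis using pdist_real assms by simp
  qed
  moreover have "z \<in> g ` {0..1}"
  proof -
    define s where "s = (hrad x - hrad p) / (hrad q - hrad p)"
    have "hrad p < hrad q" "hrad p \<le> hrad x" "hrad x \<le> hrad q"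
      using hrad_less_iff hrad_le_iff xa assms x by auto
    hence s01: "s \<in> {0..1}" by (auto simp: s_def field_simps)
    have "(1 - s) * hrad p + s * hrad q = hrad p + s * (hrad q - hrad p)"
      by (simp add: algebra_simps)
    hence "(1 - s) * hrad p + s * hrad q = hrad x" using \<open>hrad p < hrad q\<close> by (simp add: s_def)
    hence "g s = z" using hrad_inv_hrad xa x by (simp add: g_def)
    thus ?thesis using s01 by blast
  qed
  ultimately show "z \<in> geoseg (of_real p) (of_real q)"
    unfolding geoseg_def using ends disc by blast
qed

lemma geoseg_real:
  assumes "\<bar>p\<bar> < 1" "\<bar>q\<bar> < 1" "p < q"
  shows "geoseg (of_real p) (of_real q) = complex_of_real ` {p..q}"
  using geoseg_real_subset[OF assms] real_interval_subset_geoseg[OF assms] by blast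

lemma geoseg_mobius_real:
  assumes "cmod w < 1" "0 < \<sigma>" "\<sigma> < 1"
  shows "geoseg (mobius w (of_real \<sigma>)) (mobius w (of_real (-\<sigma>))) = (\<lambda>x. mobius w (of_real x)) ` {-\<sigma>..\<sigma>}"
proof -
  have "complex_of_real \<sigma> \<in> pdisc" "complex_of_real (-\<sigma>) \<in> pdisc" using assms by (auto simp: pdisc_def)
  hence "geoseg (mobius w (of_real \<sigma>)) (mobius w (of_real (-\<sigma>))) = mobius w ` geoseg (of_real (-\<sigma>)) (of_real \<sigma>)"
    using geoseg_mobius[OF assms(1)] geoseg_sym by metis
  also have "geoseg (of_real (-\<sigma>)) (of_real \<sigma>) = complex_of_real ` {-\<sigma>..\<sigma>}"
    using assms by (intro geoseg_real) auto
  finally show ?thesis by (simp add: image_image)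
qed

lemma real_midpoint_unique:
  assumes "0 < \<sigma>" "\<sigma> < 1" "cmod m < 1"
    and "pdist (of_real \<sigma>) m = hrad \<sigma>" "pdist m (of_real (-\<sigma>)) = hrad \<sigma>"
  shows "m = 0"
proof -
  have s1: "\<bar>\<sigma>\<bar> < 1" "\<bar>-\<sigma>\<bar> < 1" using assms by auto
  have "pdist (of_real (-\<sigma>)) (of_real \<sigma>) = 2 * hrad \<sigma>"
    using pdist_real[OF s1(2,1)] hrad_minus[OF s1(1)] hrad_less_iff[of 0 \<sigma>] assms by simp
  hence "Im m = 0 \<and> -\<sigma> \<le> Re m \<and> Re m \<le> \<sigma>"
    using triangle_equality_real[of "-\<sigma>" \<sigma> m] assms by (simp add: pdist_sym)
  hence mr: "m = of_real (Re m)" "Re m \<le> \<sigma>" by (simp_all add: complex_eq_iff)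
  have ra: "\<bar>Re m\<bar> < 1" using assms mr by (metis norm_of_real)
  have "\<bar>hrad \<sigma> - hrad (Re m)\<bar> = hrad \<sigma>" using assms(4) pdist_real[OF s1(1) ra] mr by simp
  moreover have "hrad (Re m) \<le> hrad \<sigma>" using hrad_le_iff[OF ra s1(1)] mr by simp
  ultimately have "hrad (Re m) = 0" by simp
  hence "Re m = 0" using hrad_inv_hrad[OF ra] by (simp add: hrad_inv_def)
  thus "m = 0" using mr by (simp add: complex_eq_iff)
qed

lemma hmid_mobius_real:
  assumes "cmod w < 1" "0 < \<sigma>" "\<sigma> < 1"
  shows "hmid (mobius w (of_real \<sigma>)) (mobius w (of_real (-\<sigma>))) = mobius w 0"
proof -
  have s1: "\<bar>\<sigma>\<bar> < 1" "\<bar>-\<sigma>\<bar> < 1" "\<bar>0::real\<bar> < 1" using assms by auto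
  have hs: "hrad \<sigma> > 0" using hrad_less_iff[of 0 \<sigma>] assms by auto
  have d: "pdist (mobius w (of_real \<sigma>)) (mobius w (of_real (-\<sigma>))) = 2 * hrad \<sigma>"
    "pdist (mobius w (of_real \<sigma>)) (mobius w 0) = hrad \<sigma>"
    "pdist (mobius w 0) (mobius w (of_real (-\<sigma>))) = hrad \<sigma>"
    using pdist_mobius_real[OF assms(1) s1(1,2)] pdist_mobius_real[OF assms(1) s1(1,3)]
      pdist_mobius_real[OF assms(1) s1(3,2)] hrad_minus[OF s1(1)] hs by simp_all
  show ?thesis unfolding hmid_def
  proof (rule the_equality)
    show "mobius w 0 \<in> pdisc \<and> pdist (mobius w (of_real \<sigma>)) (mobius w 0) = pdist (mobius w (of_real \<sigma>)) (mobius w (of_real (-\<sigma>))) / 2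
      \<and> pdist (mobius w 0) (mobius w (of_real (-\<sigma>))) = pdist (mobius w (of_real \<sigma>)) (mobius w (of_real (-\<sigma>))) / 2"
      using d mobius_in_disc[OF assms(1), of 0] by (simp add: pdisc_def)
  next
    fix m assume m: "m \<in> pdisc \<and> pdist (mobius w (of_real \<sigma>)) m = pdist (mobius w (of_real \<sigma>)) (mobius w (of_real (-\<sigma>))) / 2
      \<and> pdist m (mobius w (of_real (-\<sigma>))) = pdist (mobius w (of_real \<sigma>)) (mobius w (of_real (-\<sigma>))) / 2"
    define \<zeta> where "\<zeta> = mobius (-w) m"
    have w': "cmod (-w) < 1" using assms by simp
    have mc: "cmod m < 1" using m by (simp add: pdisc_def)
    have zc: "cmod \<zeta> < 1" using mobius_in_disc[OF w' mc] by (simp add: \<zeta>_def)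
    have mz: "m = mobius w \<zeta>" using mobius_inverse[OF w' less_imp_le[OF mc]] by (simp add: \<zeta>_def)
    have "pdist (of_real \<sigma>) \<zeta> = pdist (mobius w (of_real \<sigma>)) m"
      "pdist \<zeta> (of_real (-\<sigma>)) = pdist m (mobius w (of_real (-\<sigma>)))"
      using pdist_mobius[OF assms(1)] zc s1 unfolding mz by simp_all
    hence "pdist (of_real \<sigma>) \<zeta> = hrad \<sigma>" "pdist \<zeta> (of_real (-\<sigma>)) = hrad \<sigma>"
      using m d by simp_all
    hence "\<zeta> = 0" using real_midpoint_unique[OF assms(2,3) zc] by blast
    thus "m = mobius w 0" using mz by simp
  qed
qed

(* The parameter t of the automorphism z \<mapsto> mobius (i t) z carrying a symmetric real interval
   onto the lower side: the root in (0, 1) of b (1 + t\<^sup>2) = (1 + a\<^sup>2 + b\<^sup>2) t. *)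
definition side_param :: "real \<Rightarrow> real \<Rightarrow> real" where
  "side_param a b = ((1 + a\<^sup>2 + b\<^sup>2) - sqrt ((1 + a\<^sup>2 + b\<^sup>2)\<^sup>2 - 4 * b\<^sup>2)) / (2 * b)"

lemma side_param:
  assumes "a > 0" "b > 0" "a\<^sup>2 + b\<^sup>2 < 1"
  shows "0 < side_param a b" "side_param a b < 1"
    "b * (1 + (side_param a b)\<^sup>2) = (1 + a\<^sup>2 + b\<^sup>2) * side_param a b"
proof -
  define K where "K = 1 + a\<^sup>2 + b\<^sup>2"
  have "a\<^sup>2 + (1 - b)\<^sup>2 > 0" using assms by (simp add: add_pos_nonneg)
  hence K2b: "K > 2 * b" by (simp add: K_def power2_eq_square algebra_simps)
  have "K\<^sup>2 > (2 * b)\<^sup>2" using K2b assms by (intro power_strict_mono) auto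
  hence pos: "K\<^sup>2 - 4 * b\<^sup>2 > 0" by (simp add: power2_eq_square)
  define S where "S = sqrt (K\<^sup>2 - 4 * b\<^sup>2)"
  have S0: "S \<ge> 0" and SS: "S\<^sup>2 = K\<^sup>2 - 4 * b\<^sup>2" using pos by (simp_all add: S_def)
  have t: "side_param a b = (K - S) / (2 * b)" by (simp add: side_param_def K_def S_def)
  have "S\<^sup>2 < K\<^sup>2" using SS assms by simp
  hence "S < K" using K2b assms by (smt (verit) S0 power_mono)
  thus "0 < side_param a b" using assms by (simp add: t)
  have "K * b > 2 * b\<^sup>2" using mult_strict_right_mono[OF K2b assms(2)] by (simp add: power2_eq_square)
  moreover have "(K - 2 * b)\<^sup>2 = K\<^sup>2 - 4 * (K * b) + 4 * b\<^sup>2" by (simp add: power2_eq_square algebra_simps)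
  ultimately have "(K - 2 * b)\<^sup>2 < S\<^sup>2" using SS by linarith
  hence "K - 2 * b < S" using S0 K2b by (smt (verit) power_mono)
  thus "side_param a b < 1" using assms by (simp add: t field_simps)
  have "b * (1 + ((K - S) / (2 * b))\<^sup>2) = K * ((K - S) / (2 * b))"
    using assms SS by (simp add: field_simps power2_eq_square)
  thus "b * (1 + (side_param a b)\<^sup>2) = (1 + a\<^sup>2 + b\<^sup>2) * side_param a b" by (simp add: t K_def)
qed

definition side_point :: "real \<Rightarrow> real \<Rightarrow> complex" where
  "side_point t x = mobius (Complex 0 t) (of_real x)"

lemma side_denom_pos: "1 + t\<^sup>2 * x\<^sup>2 > (0::real)"
  by (smt (verit) zero_le_power2 mult_nonneg_nonneg)

lemma side_point_coords:
  "side_point t x = Complex (x * (1 - t\<^sup>2) / (1 + t\<^sup>2 * x\<^sup>2)) (- t * (1 + x\<^sup>2) / (1 + t\<^sup>2 * x\<^sup>2))"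
  by (simp add: side_point_def mobius_imag_real)

lemma side_point_0: "side_point t 0 = Complex 0 (-t)"
  by (simp add: side_point_coords)

lemma side_point_minus: "- side_point t x = mobius (Complex 0 (-t)) (of_real (-x))"
  using mobius_imag_real[of "-t" "-x"] by (simp add: side_point_coords complex_eq_iff)

lemma side_point_Im_neg: "t > 0 \<Longrightarrow> Im (side_point t x) < 0"
  using side_denom_pos[of t x] by (simp add: side_point_coords divide_neg_pos add_pos_nonneg)

lemma side_point_norm2: "(cmod (side_point t x))\<^sup>2 = (x\<^sup>2 + t\<^sup>2) / (1 + t\<^sup>2 * x\<^sup>2)"
proof -
  have d: "1 + t\<^sup>2 * x\<^sup>2 \<noteq> 0" using side_denom_pos[of t x] by simp
  have "(x * (1 - t\<^sup>2))\<^sup>2 + (t * (1 + x\<^sup>2))\<^sup>2 = (x\<^sup>2 + t\<^sup>2) * (1 + t\<^sup>2 * x\<^sup>2)"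
    by (simp add: power2_eq_square algebra_simps)
  thus ?thesis using d unfolding side_point_coords cmod_power2
    by (simp add: power_divide add_divide_distrib[symmetric] power2_eq_square)
qed

lemma side_point_in_disc:
  assumes "\<bar>t\<bar> < 1" "\<bar>x\<bar> < 1"
  shows "cmod (side_point t x) < 1"
  using mobius_in_disc[of "Complex 0 t" "of_real x"] assms
  by (simp add: side_point_def cmod_def abs_square_less_1)

(* Half the hyperbolic length of the lower side, in the real coordinate. *)
definition side_halfwidth :: "real \<Rightarrow> real \<Rightarrow> real" where
  "side_halfwidth a b = Re (mobius (Complex 0 (- side_param a b)) (Complex a (-b)))"

(* The lower corners are the images of \<plusminus>side_halfwidth: the automorphism with parameter
   -i t maps the corner (a, -b) to the real axis exactly because of the equation for t. *)
lemma lower_corners: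
  assumes "a > 0" "b > 0" "a\<^sup>2 + b\<^sup>2 < 1"
  shows "0 < side_halfwidth a b" "side_halfwidth a b < 1"
    "Complex a (-b) = side_point (side_param a b) (side_halfwidth a b)"
    "Complex (-a) (-b) = side_point (side_param a b) (- side_halfwidth a b)"
proof -
  define t where "t = side_param a b"
  have t: "0 < t" "t < 1" "b * (1 + t\<^sup>2) = (1 + a\<^sup>2 + b\<^sup>2) * t"
    using side_param[OF assms] by (simp_all add: t_def)
  define u where "u = Complex a (-b)"
  define m where "m = mobius (Complex 0 (-t)) u"
  have uc: "cmod u < 1" using assms by (simp add: u_def cmod_def)
  have wc: "cmod (Complex 0 (-t)) < 1" using t by (simp add: cmod_def)
  have "b\<^sup>2 < 1" using assms by (smt (verit) zero_le_power2)
  hence "b < 1" using assms by (simp add: abs_square_less_1)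
  hence "t * b < 1 * 1" using t assms by (intro mult_strict_mono) auto
  hence den: "(1 - t * b)\<^sup>2 + (t * a)\<^sup>2 > 0" by (intro add_pos_nonneg) auto
  have "Im m = 0"
    unfolding m_def mobius_def u_def using t(3) den by (simp add: Im_divide power2_eq_square algebra_simps)
  hence me: "m = of_real (side_halfwidth a b)" by (simp add: complex_eq_iff side_halfwidth_def m_def u_def t_def)
  have "Re m = a * (1 - t\<^sup>2) / ((1 - t * b)\<^sup>2 + (t * a)\<^sup>2)"
    unfolding m_def mobius_def u_def using den by (simp add: Re_divide power2_eq_square algebra_simps)
  moreover have "a * (1 - t\<^sup>2) > 0" using t assms by (simp add: power_less_one_iff abs_square_less_1)
  ultimately show "0 < side_halfwidth a b" using den me by simp
  have "cmod m < 1" using mobius_in_disc[OF wc uc] by (simp add: m_def)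
  thus "side_halfwidth a b < 1" using me by simp
  have "u = mobius (- Complex 0 (-t)) m" using mobius_inverse[OF wc less_imp_le[OF uc]] by (simp add: m_def)
  moreover have "- Complex 0 (-t) = Complex 0 t" by (simp add: complex_eq_iff)
  ultimately show c1: "Complex a (-b) = side_point (side_param a b) (side_halfwidth a b)"
    using me by (simp add: side_point_def u_def t_def)
  thus "Complex (-a) (-b) = side_point (side_param a b) (- side_halfwidth a b)"
    by (simp add: side_point_coords complex_eq_iff)
qed

definition lower_arc :: "real \<Rightarrow> real \<Rightarrow> complex set" where
  "lower_arc a b = side_point (side_param a b) ` {- side_halfwidth a b..side_halfwidth a b}"

lemma lower_side_eq:
  assumes "a > 0" "b > 0" "a\<^sup>2 + b\<^sup>2 < 1"
  shows "lower_side a b = lower_arc a b"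
proof -
  have c: "cmod (Complex 0 (side_param a b)) < 1" using side_param[OF assms] by (simp add: cmod_def)
  show ?thesis unfolding lower_side_def lower_corners(3,4)[OF assms] lower_arc_def side_point_def
    by (rule geoseg_mobius_real[OF c lower_corners(1,2)[OF assms]])
qed

lemma lower_hmid:
  assumes "a > 0" "b > 0" "a\<^sup>2 + b\<^sup>2 < 1"
  shows "hmid (Complex a (-b)) (Complex (-a) (-b)) = Complex 0 (- side_param a b)"
proof -
  have c: "cmod (Complex 0 (side_param a b)) < 1" using side_param[OF assms] by (simp add: cmod_def)
  have "hmid (Complex a (-b)) (Complex (-a) (-b)) = mobius (Complex 0 (side_param a b)) 0"
    unfolding lower_corners(3,4)[OF assms] side_point_def
    by (rule hmid_mobius_real[OF c lower_corners(1,2)[OF assms]])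
  thus ?thesis by (simp add: mobius_def complex_eq_iff)
qed

(* The upper side is the reflection of the lower side through the origin, with midpoint i t. *)
lemma upper_hmid:
  assumes "a > 0" "b > 0" "a\<^sup>2 + b\<^sup>2 < 1"
  shows "hmid (Complex a b) (Complex (-a) b) = Complex 0 (side_param a b)"
proof -
  define t where "t = side_param a b"
  have c: "cmod (Complex 0 (-t)) < 1" using side_param[OF assms] by (simp add: cmod_def t_def)
  have "Complex a b = - Complex (-a) (-b)" "Complex (-a) b = - Complex a (-b)"
    by (simp_all add: complex_eq_iff)
  hence "Complex a b = mobius (Complex 0 (-t)) (of_real (side_halfwidth a b))"
    "Complex (-a) b = mobius (Complex 0 (-t)) (of_real (- side_halfwidth a b))"
    using lower_corners(3,4)[OF assms] side_point_minus[of t] by (simp_all add: t_def)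
  hence "hmid (Complex a b) (Complex (-a) b) = mobius (Complex 0 (-t)) 0"
    using hmid_mobius_real[OF c lower_corners(1,2)[OF assms]] by simp
  thus ?thesis by (simp add: mobius_def t_def complex_eq_iff)
qed

lemma corners_in_disc:
  assumes "a\<^sup>2 + b\<^sup>2 < 1"
  shows "Complex a b \<in> pdisc" "Complex (-a) b \<in> pdisc" "Complex a (-b) \<in> pdisc"
    "Complex (-a) (-b) \<in> pdisc" "Complex b (-a) \<in> pdisc" "Complex (-b) (-a) \<in> pdisc"
proof -
  have "sqrt (a\<^sup>2 + b\<^sup>2) < 1" using assms by (metis real_sqrt_less_mono real_sqrt_one)
  thus "Complex a b \<in> pdisc" "Complex (-a) b \<in> pdisc" "Complex a (-b) \<in> pdisc"
    "Complex (-a) (-b) \<in> pdisc" "Complex b (-a) \<in> pdisc" "Complex (-b) (-a) \<in> pdisc"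
    by (simp_all add: pdisc_def cmod_def add.commute)
qed

lemma side_rotation:
  assumes "cmod r = 1" "a > 0" "b > 0" "a\<^sup>2 + b\<^sup>2 < 1"
  shows "geoseg (r * Complex (-a) (-b)) (r * Complex a (-b)) = (\<lambda>z. r * z) ` lower_arc a b"
  using geoseg_rotation[OF assms(1)] corners_in_disc[OF assms(4)] lower_side_eq[OF assms(2-4)]
    geoseg_sym by (simp add: lower_side_def)

lemma upper_side_eq:
  assumes "a > 0" "b > 0" "a\<^sup>2 + b\<^sup>2 < 1"
  shows "upper_side a b = uminus ` lower_arc a b"
proof -
  have "- Complex (-a) (-b) = Complex a b" "- Complex a (-b) = Complex (-a) b"
    by (simp_all add: complex_eq_iff)
  thus ?thesis using side_rotation[of "-1", OF _ assms] by (simp add: upper_side_def)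
qed

lemma right_side_eq:
  assumes "a > 0" "b > 0" "a\<^sup>2 + b\<^sup>2 < 1"
  shows "right_side a b = (\<lambda>z. \<i> * z) ` lower_arc b a"
proof -
  have "\<i> * Complex (-b) (-a) = Complex a (-b)" "\<i> * Complex b (-a) = Complex a b"
    by (simp_all add: complex_eq_iff)
  thus ?thesis using side_rotation[of \<i> b a] assms by (simp add: right_side_def add.commute)
qed

lemma left_side_eq:
  assumes "a > 0" "b > 0" "a\<^sup>2 + b\<^sup>2 < 1"
  shows "left_side a b = (\<lambda>z. - \<i> * z) ` lower_arc b a"
proof -
  have "- \<i> * Complex (-b) (-a) = Complex (-a) b" "- \<i> * Complex b (-a) = Complex (-a) (-b)"
    by (simp_all add: complex_eq_iff)
  thus ?thesis using side_rotation[of "- \<i>" b a] assms geoseg_sym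
    by (simp add: left_side_def add.commute)
qed

lemma lower_arc_in_disc:
  assumes "a > 0" "b > 0" "a\<^sup>2 + b\<^sup>2 < 1"
  shows "lower_arc a b \<subseteq> pdisc"
proof -
  have "lower_side a b \<subseteq> pdisc" unfolding lower_side_def by (rule geoseg_in_disc)
  thus ?thesis using lower_side_eq[OF assms] by simp
qed

lemma lower_arc_compact:
  assumes "a > 0" "b > 0" "a\<^sup>2 + b\<^sup>2 < 1"
  shows "compact (lower_arc a b)"
proof -
  have "\<And>x. 1 + (side_param a b)\<^sup>2 * x\<^sup>2 \<noteq> 0" using side_denom_pos by (metis less_irrefl)
  hence "continuous_on {- side_halfwidth a b..side_halfwidth a b} (side_point (side_param a b))"
    unfolding side_point_coords by (intro continuous_intros) auto
  thus ?thesis unfolding lower_arc_def by (intro compact_continuous_image) auto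
qed

lemma lower_arc_midpoint:
  assumes "a > 0" "b > 0" "a\<^sup>2 + b\<^sup>2 < 1"
  shows "Complex 0 (- side_param a b) \<in> lower_arc a b"
  using lower_corners(1)[OF assms] side_point_0[of "side_param a b", symmetric]
  by (auto simp: lower_arc_def)

lemma upper_arc_midpoint:
  assumes "a > 0" "b > 0" "a\<^sup>2 + b\<^sup>2 < 1"
  shows "Complex 0 (side_param a b) \<in> uminus ` lower_arc a b"
proof -
  have "Complex 0 (side_param a b) = - Complex 0 (- side_param a b)" by (simp add: complex_eq_iff)
  thus ?thesis using lower_arc_midpoint[OF assms] by blast
qed

(* The circle through the lower arc (orthogonal to the unit circle): side_circle t z = 0. *)
definition side_circle :: "real \<Rightarrow> complex \<Rightarrow> real" where
  "side_circle t z = (1 + t\<^sup>2) * Im z + t * (1 + (cmod z)\<^sup>2)"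

lemma side_circle_side_point: "side_circle t (side_point t x) = 0"
proof -
  have "1 + t\<^sup>2 * x\<^sup>2 \<noteq> 0" using side_denom_pos[of t x] by simp
  thus ?thesis unfolding side_circle_def side_point_norm2 by (simp add: side_point_coords field_simps)
qed

(* The sign of side_circle t decides on which side of the circle the automorphism with
   parameter -i t moves a point: it is the sign of the imaginary part of the image. *)
lemma Im_mobius_side_circle:
  "Im (mobius (Complex 0 (-t)) z) = side_circle t z / (cmod (1 - cnj (Complex 0 (-t)) * z))\<^sup>2"
proof -
  have "(Im z + t) * (1 + t * Im z) + Re z * (t * Re z) = side_circle t z"
    unfolding side_circle_def cmod_power2 by (simp add: algebra_simps power2_eq_square)
  thus ?thesis unfolding mobius_def by (simp add: Im_divide cmod_power2 algebra_simps)
qed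

lemma side_circle_rotated:
  "side_circle s (\<i> * side_point t x)
     = (s * (1 + t\<^sup>2) * (1 + x\<^sup>2) + (1 + s\<^sup>2) * (1 - t\<^sup>2) * x) / (1 + t\<^sup>2 * x\<^sup>2)"
proof -
  have d: "1 + t\<^sup>2 * x\<^sup>2 \<noteq> 0" using side_denom_pos[of t x] by simp
  have combine: "c * (u / D) + s * (1 + v / D) = (c * u + s * (D + v)) / D" if "D \<noteq> 0" for c u v D :: real
    using that by (simp add: field_simps)
  have "side_circle s (\<i> * side_point t x)
      = (1 + s\<^sup>2) * (x * (1 - t\<^sup>2) / (1 + t\<^sup>2 * x\<^sup>2)) + s * (1 + (x\<^sup>2 + t\<^sup>2) / (1 + t\<^sup>2 * x\<^sup>2))"
    unfolding side_circle_def norm_mult norm_ii mult_1 side_point_norm2 by (simp add: side_point_coords)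
  also have "\<dots> = ((1 + s\<^sup>2) * (x * (1 - t\<^sup>2)) + s * ((1 + t\<^sup>2 * x\<^sup>2) + (x\<^sup>2 + t\<^sup>2))) / (1 + t\<^sup>2 * x\<^sup>2)"
    by (rule combine[OF d])
  also have "(1 + s\<^sup>2) * (x * (1 - t\<^sup>2)) + s * ((1 + t\<^sup>2 * x\<^sup>2) + (x\<^sup>2 + t\<^sup>2))
      = s * (1 + t\<^sup>2) * (1 + x\<^sup>2) + (1 + s\<^sup>2) * (1 - t\<^sup>2) * x"
    by (simp add: algebra_simps)
  finally show ?thesis .
qed

lemma side_circle_rotated_minus:
  "side_circle s (- \<i> * side_point t x) = side_circle s (\<i> * side_point t (-x))"
proof -
  have "Im (- \<i> * side_point t x) = Im (\<i> * side_point t (-x))" by (simp add: side_point_coords)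
  moreover have "(cmod (side_point t x))\<^sup>2 = (cmod (side_point t (-x)))\<^sup>2"
    by (simp add: side_point_norm2)
  hence "cmod (- \<i> * side_point t x) = cmod (\<i> * side_point t (-x))"
    by (simp add: norm_mult power2_eq_imp_eq)
  ultimately show ?thesis by (simp add: side_circle_def)
qed

lemma below_smaller_root:
  fixes A B x \<sigma> :: real
  assumes "A > 0" "0 < \<sigma>" "\<sigma> < 1" "\<bar>x\<bar> < 1" "B * \<sigma> = A * (1 + \<sigma>\<^sup>2)"
    and "A * (1 + x\<^sup>2) - B * x \<ge> 0"
  shows "x \<le> \<sigma>"
proof (rule ccontr)
  assume "\<not> x \<le> \<sigma>"
  hence xs: "x - \<sigma> > 0" by simp
  have "x * \<sigma> < 1"
    using assms by (smt (verit) mult_less_cancel_left1 mult_less_cancel_right1 abs_less_iff mult_pos_pos)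
  hence "(x - \<sigma>) * (x * \<sigma> - 1) < 0" using xs by (simp add: mult_pos_neg)
  moreover have "(A * (1 + x\<^sup>2) - B * x) * \<sigma> = A * (1 + x\<^sup>2) * \<sigma> - (B * \<sigma>) * x"
    by (simp add: algebra_simps)
  hence "(A * (1 + x\<^sup>2) - B * x) * \<sigma> = A * ((x - \<sigma>) * (x * \<sigma> - 1))"
    unfolding assms(5) by (simp add: algebra_simps power2_eq_square)
  moreover have "(A * (1 + x\<^sup>2) - B * x) * \<sigma> \<ge> 0" using assms by simp
  ultimately show False using mult_pos_neg[OF assms(1)] by fastforce
qed

(* A point of the disc on the circle side_circle t is the image of a real point: the
   automorphism with parameter -i t maps it to the real axis. *)
lemma on_side_circle_is_side_point:
  assumes "0 < t" "t < 1" "cmod z < 1" "side_circle t z = 0"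
  obtains x where "\<bar>x\<bar> < 1" "z = side_point t x"
proof -
  have wc: "cmod (Complex 0 (-t)) < 1" using assms by (simp add: cmod_def)
  define w where "w = mobius (Complex 0 (-t)) z"
  have "Im w = 0" using Im_mobius_side_circle[of t z] assms(4) by (simp add: w_def)
  hence wr: "w = of_real (Re w)" by (simp add: complex_eq_iff)
  have "cmod w < 1" using mobius_in_disc[OF wc assms(3)] by (simp add: w_def)
  hence "\<bar>Re w\<bar> < 1" by (metis wr norm_of_real)
  moreover have "z = mobius (- Complex 0 (-t)) w"
    using mobius_inverse[OF wc less_imp_le[OF assms(3)]] by (simp add: w_def)
  moreover have "- Complex 0 (-t) = Complex 0 t" by (simp add: complex_eq_iff)
  ultimately show thesis using that wr by (simp add: side_point_def)
qed

(* A point on the circle of the lower side that lies between the circles of the vertical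
   sides belongs to the lower arc: its real coordinate x satisfies the quadratic inequalities
   cut out by the two vertical circles, whose common boundary values are \<plusminus>side_halfwidth. *)
lemma on_lower_circle_in_arc:
  assumes ab: "a > 0" "b > 0" "a\<^sup>2 + b\<^sup>2 < 1"
    and z: "cmod z < 1" "side_circle (side_param a b) z = 0"
      "side_circle (side_param b a) (- \<i> * z) \<ge> 0" "side_circle (side_param b a) (\<i> * z) \<ge> 0"
  shows "z \<in> lower_arc a b"
proof -
  define t where "t = side_param a b"
  define s where "s = side_param b a"
  define \<sigma> where "\<sigma> = side_halfwidth a b"
  have ba: "b > 0" "a > 0" "b\<^sup>2 + a\<^sup>2 < 1" using ab by auto
  have t: "0 < t" "t < 1" using side_param[OF ab] by (simp_all add: t_def)
  have s: "0 < s" "a * (1 + s\<^sup>2) = (1 + b\<^sup>2 + a\<^sup>2) * s" using side_param[OF ba] by (simp_all add: s_def)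
  have sg: "0 < \<sigma>" "\<sigma> < 1" "Complex a (-b) = side_point t \<sigma>"
    using lower_corners[OF ab] by (simp_all add: \<sigma>_def t_def)
  have "side_circle t z = 0" using z(2) by (simp add: t_def)
  then obtain x where xa: "\<bar>x\<bar> < 1" and zx: "z = side_point t x"
    using on_side_circle_is_side_point[OF t z(1)] by blast
  define A where "A = s * (1 + t\<^sup>2)"
  define B where "B = (1 + s\<^sup>2) * (1 - t\<^sup>2)"
  have A: "A > 0" using s t by (simp add: A_def add_pos_nonneg)
  have quad: "side_circle s (\<i> * side_point t y) = (A * (1 + y\<^sup>2) + B * y) / (1 + t\<^sup>2 * y\<^sup>2)" for y
    by (simp add: side_circle_rotated A_def B_def)
  (* the corner (a, -b) lies on the circle of the left side *)
  have "- \<i> * side_point t \<sigma> = Complex (-b) (-a)" using sg(3)[symmetric] by (simp add: complex_eq_iff)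
  hence "side_circle s (- \<i> * side_point t \<sigma>) = 0"
    using s(2) by (simp add: side_circle_def cmod_def algebra_simps)
  hence "(A * (1 + (-\<sigma>)\<^sup>2) + B * (-\<sigma>)) / (1 + t\<^sup>2 * (-\<sigma>)\<^sup>2) = 0"
    unfolding side_circle_rotated_minus quad .
  hence rel: "B * \<sigma> = A * (1 + \<sigma>\<^sup>2)" using side_denom_pos[of t "-\<sigma>"] by simp
  have "A * (1 + (- x)\<^sup>2) + B * (- x) \<ge> 0"
    using z(3) side_circle_rotated_minus unfolding zx s_def[symmetric]
    using side_denom_pos[of t "- x"] by (simp add: quad zero_le_divide_iff)
  hence "x \<le> \<sigma>" using below_smaller_root[OF A sg(1,2) xa rel] by simp
  moreover have "A * (1 + (- x)\<^sup>2) - B * (- x) \<ge> 0"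
    using z(4) unfolding zx quad s_def[symmetric]
    using side_denom_pos[of t x] by (simp add: zero_le_divide_iff)
  hence "- x \<le> \<sigma>" using xa by (intro below_smaller_root[OF A sg(1,2) _ rel]) simp_all
  ultimately show ?thesis unfolding lower_arc_def zx t_def[symmetric] \<sigma>_def[symmetric] by auto
qed
lemma quad_boundary_eq:
  assumes "a > 0" "b > 0" "a\<^sup>2 + b\<^sup>2 < 1"
  shows "quad_boundary a b = uminus ` lower_arc a b \<union> lower_arc a b
           \<union> (\<lambda>z. - \<i> * z) ` lower_arc b a \<union> (\<lambda>z. \<i> * z) ` lower_arc b a"
  unfolding quad_boundary_def upper_side_eq[OF assms] lower_side_eq[OF assms]
    left_side_eq[OF assms] right_side_eq[OF assms] ..

definition quad_core :: "real \<Rightarrow> real \<Rightarrow> complex set" where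
  "quad_core a b = {z. cmod z < 1 \<and> side_circle (side_param a b) z > 0
      \<and> side_circle (side_param a b) (-z) > 0 \<and> side_circle (side_param b a) (- \<i> * z) > 0
      \<and> side_circle (side_param b a) (\<i> * z) > 0}"

definition quad_core_closed :: "real \<Rightarrow> real \<Rightarrow> complex set" where
  "quad_core_closed a b = {z. cmod z \<le> 1 \<and> side_circle (side_param a b) z \<ge> 0
      \<and> side_circle (side_param a b) (-z) \<ge> 0 \<and> side_circle (side_param b a) (- \<i> * z) \<ge> 0
      \<and> side_circle (side_param b a) (\<i> * z) \<ge> 0}"

lemma quad_core_subset: "quad_core a b \<subseteq> quad_core_closed a b"
  by (auto simp: quad_core_def quad_core_closed_def)

lemma side_circle_continuous: "continuous_on UNIV (\<lambda>z. side_circle t (c * z))"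
  unfolding side_circle_def by (intro continuous_intros)

lemma quad_core_open: "open (quad_core a b)"
proof -
  have "quad_core a b = {z. cmod z < 1} \<inter> {z. 0 < side_circle (side_param a b) (1 * z)}
      \<inter> {z. 0 < side_circle (side_param a b) ((-1) * z)}
      \<inter> {z. 0 < side_circle (side_param b a) (- \<i> * z)} \<inter> {z. 0 < side_circle (side_param b a) (\<i> * z)}"
    by (auto simp: quad_core_def)
  moreover have "open {z. cmod z < 1}" by (intro open_Collect_less continuous_intros)
  moreover have "\<And>t c. open {z. 0 < side_circle t (c * z)}"
    by (intro open_Collect_less continuous_intros side_circle_continuous)
  ultimately show ?thesis by (metis open_Int)
qed

lemma quad_core_closed_closed: "closed (quad_core_closed a b)"
proof -
  have "quad_core_closed a b = {z. cmod z \<le> 1} \<inter> {z. 0 \<le> side_circle (side_param a b) (1 * z)}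
      \<inter> {z. 0 \<le> side_circle (side_param a b) ((-1) * z)}
      \<inter> {z. 0 \<le> side_circle (side_param b a) (- \<i> * z)} \<inter> {z. 0 \<le> side_circle (side_param b a) (\<i> * z)}"
    by (auto simp: quad_core_closed_def)
  moreover have "closed {z. cmod z \<le> 1}" by (intro closed_Collect_le continuous_intros)
  moreover have "\<And>t c. closed {z. 0 \<le> side_circle t (c * z)}"
    by (intro closed_Collect_le continuous_intros side_circle_continuous)
  ultimately show ?thesis by (metis closed_Int)
qed

lemma rotation_simps:
  "- \<i> * (- \<i> * z) = - z" "\<i> * (- \<i> * z) = z" "- \<i> * (\<i> * z) = z" "\<i> * (\<i> * z) = - z"
  "- \<i> * (- z) = \<i> * z" "\<i> * (- z) = - \<i> * z"
  by (simp_all add: complex_eq_iff)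

(* The boundary lies on the four circles, hence outside the open core. *)
lemma quad_core_disjoint_boundary:
  assumes "a > 0" "b > 0" "a\<^sup>2 + b\<^sup>2 < 1"
  shows "quad_core a b \<inter> quad_boundary a b = {}"
proof -
  have circ: "w \<in> lower_arc a' b' \<Longrightarrow> side_circle (side_param a' b') w = 0" for w a' b'
    by (auto simp: lower_arc_def side_circle_side_point)
  show ?thesis unfolding quad_boundary_eq[OF assms]
    by (auto simp: quad_core_def rotation_simps dest!: circ)
qed

lemma side_circle_unit_band:
  assumes "cmod z = 1" "0 < t" "c \<ge> 0" "c * (1 + t\<^sup>2) = K * t"
    and "side_circle t z \<ge> 0" "side_circle t (-z) \<ge> 0"
  shows "K * \<bar>Im z\<bar> \<le> 2 * c"
proof -
  have "(1 + t\<^sup>2) * Im z + 2 * t \<ge> 0" "- ((1 + t\<^sup>2) * Im z) + 2 * t \<ge> 0"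
    using assms(1,5,6) unfolding side_circle_def by (simp_all add: algebra_simps)
  hence "(1 + t\<^sup>2) * \<bar>Im z\<bar> \<le> 2 * t" by (simp add: abs_mult abs_le_iff)
  hence "c * ((1 + t\<^sup>2) * \<bar>Im z\<bar>) \<le> c * (2 * t)" using assms(3) by (rule mult_left_mono)
  moreover have "c * ((1 + t\<^sup>2) * \<bar>Im z\<bar>) = (c * (1 + t\<^sup>2)) * \<bar>Im z\<bar>" by (simp only: mult.assoc)
  ultimately have "t * (K * \<bar>Im z\<bar>) \<le> t * (2 * c)" unfolding assms(4) by (simp add: algebra_simps)
  thus ?thesis using assms(2) by simp
qed

(* Hence the closed core stays away from the unit circle: the corners are inside the disc. *)
lemma quad_core_closed_in_disc:
  assumes ab: "a > 0" "b > 0" "a\<^sup>2 + b\<^sup>2 < 1" and z: "z \<in> quad_core_closed a b"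
  shows "cmod z < 1"
proof (rule ccontr)
  assume "\<not> cmod z < 1"
  hence n1: "cmod z = 1" using z by (simp add: quad_core_closed_def)
  define K where "K = 1 + a\<^sup>2 + b\<^sup>2"
  have ba: "b > 0" "a > 0" "b\<^sup>2 + a\<^sup>2 < 1" using ab by auto
  have "K * \<bar>Im z\<bar> \<le> 2 * b"
    using side_param[OF ab] z n1 ab unfolding K_def quad_core_closed_def
    by (intro side_circle_unit_band[where t = "side_param a b"]) auto
  moreover have "K * \<bar>Im (\<i> * z)\<bar> \<le> 2 * a"
    using side_param[OF ba] z n1 ab unfolding K_def quad_core_closed_def
    by (intro side_circle_unit_band[where t = "side_param b a"]) (auto simp: norm_mult algebra_simps)
  ultimately have "(K * \<bar>Im z\<bar>)\<^sup>2 \<le> (2 * b)\<^sup>2" "(K * \<bar>Re z\<bar>)\<^sup>2 \<le> (2 * a)\<^sup>2"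
    by (intro power_mono; simp add: K_def)+
  hence "K\<^sup>2 * ((Re z)\<^sup>2 + (Im z)\<^sup>2) \<le> 4 * (a\<^sup>2 + b\<^sup>2)"
    by (simp add: algebra_simps)
  moreover have "(Re z)\<^sup>2 + (Im z)\<^sup>2 = 1" using n1 by (simp add: cmod_power2[symmetric])
  moreover have "(1 - (a\<^sup>2 + b\<^sup>2))\<^sup>2 > 0" using ab by simp
  hence "4 * (a\<^sup>2 + b\<^sup>2) < K\<^sup>2" by (simp add: K_def power2_eq_square algebra_simps)
  ultimately show False by simp
qed

(* A frontier point of the core lies on one of the circles and between the other two,
   hence on one of the sides. *)
lemma frontier_quad_core:
  assumes ab: "a > 0" "b > 0" "a\<^sup>2 + b\<^sup>2 < 1"
  shows "frontier (quad_core a b) \<subseteq> quad_boundary a b"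
proof
  fix z assume "z \<in> frontier (quad_core a b)"
  hence zc: "z \<in> quad_core_closed a b" and zn: "z \<notin> quad_core a b"
    using closure_minimal[OF quad_core_subset quad_core_closed_closed] interior_open[OF quad_core_open]
    by (auto simp: frontier_def)
  have ba: "b > 0" "a > 0" "b\<^sup>2 + a\<^sup>2 < 1" using ab by auto
  have z1: "cmod z < 1" using quad_core_closed_in_disc[OF ab zc] .
  define t where "t = side_param a b"
  define s where "s = side_param b a"
  have P: "side_circle t z \<ge> 0" "side_circle t (-z) \<ge> 0" "side_circle s (- \<i> * z) \<ge> 0"
    "side_circle s (\<i> * z) \<ge> 0"
    using zc by (auto simp: quad_core_closed_def t_def s_def)
  have "side_circle t z = 0 \<or> side_circle t (-z) = 0 \<or> side_circle s (- \<i> * z) = 0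
      \<or> side_circle s (\<i> * z) = 0"
    using zn z1 P by (auto simp: quad_core_def t_def s_def)
  moreover
  { assume "side_circle t z = 0"
    hence "z \<in> lower_arc a b" using on_lower_circle_in_arc[OF ab z1] P by (simp add: t_def s_def) }
  moreover
  { assume "side_circle t (-z) = 0"
    hence "-z \<in> lower_arc a b"
      using on_lower_circle_in_arc[OF ab, of "-z"] z1 P by (simp add: t_def s_def rotation_simps)
    hence "z \<in> uminus ` lower_arc a b" by (metis image_eqI minus_minus) }
  moreover
  { assume "side_circle s (- \<i> * z) = 0"
    hence "- \<i> * z \<in> lower_arc b a"
      using on_lower_circle_in_arc[OF ba, of "- \<i> * z"] z1 P
      by (simp add: t_def s_def rotation_simps norm_mult)
    hence "z \<in> (\<lambda>z. \<i> * z) ` lower_arc b a" by (metis image_eqI rotation_simps(2)) }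
  moreover
  { assume "side_circle s (\<i> * z) = 0"
    hence "\<i> * z \<in> lower_arc b a"
      using on_lower_circle_in_arc[OF ba, of "\<i> * z"] z1 P
      by (simp add: t_def s_def rotation_simps norm_mult)
    hence "z \<in> (\<lambda>z. - \<i> * z) ` lower_arc b a" by (metis image_eqI rotation_simps(3)) }
  ultimately show "z \<in> quad_boundary a b" unfolding quad_boundary_eq[OF ab] by blast
qed

(* The bounded open core is contained in the inside of the boundary: the component of a core
   point in the complement of the boundary cannot leave the core without crossing its
   frontier. *)
lemma quad_core_inside:
  assumes ab: "a > 0" "b > 0" "a\<^sup>2 + b\<^sup>2 < 1" and z: "z \<in> quad_core a b"
  shows "z \<in> inside (quad_boundary a b)"
proof -
  let ?S = "quad_boundary a b"
  let ?C = "connected_component_set (- ?S) z"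
  have zS: "z \<notin> ?S" using quad_core_disjoint_boundary[OF ab] z by blast
  have "?C \<subseteq> quad_core a b"
  proof (rule ccontr)
    assume "\<not> ?C \<subseteq> quad_core a b"
    moreover have "z \<in> ?C" using zS by simp
    ultimately have "?C \<inter> frontier (quad_core a b) \<noteq> {}"
      using connected_Int_frontier[OF connected_connected_component] z by blast
    moreover have "?C \<subseteq> - ?S" by (rule connected_component_subset)
    ultimately show False using frontier_quad_core[OF ab] by blast
  qed
  moreover have "bounded (quad_core a b)"
    by (rule bounded_subset[of "ball 0 1"]) (auto simp: quad_core_def)
  ultimately have "bounded ?C" using bounded_subset by blast
  thus ?thesis using zS by (simp add: inside_def)
qed

(* The quadrilateral lies in the disc, since the inside of a subset of the disc does. *)
lemma quad_in_disc: "quad a b \<subseteq> pdisc"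
proof -
  let ?S = "quad_boundary a b"
  have S: "?S \<subseteq> ball 0 1"
    unfolding quad_boundary_def upper_side_def lower_side_def left_side_def right_side_def
    by (auto simp: geoseg_def pdisc_def)
  have "connected (- ball (0::complex) 1)"
    by (rule connected_complement_bounded_convex) auto
  moreover have "\<not> bounded (- ball (0::complex) 1)"
    by (metis bounded_ball cobounded_imp_unbounded)
  ultimately have "inside ?S \<subseteq> ball 0 1 - ?S" by (rule inside_subset) (use S in auto)
  thus ?thesis using S unfolding quad_def pdisc_def by auto
qed

lemma axis_segment_eq:
  assumes "t > 0"
  shows "closed_segment (Complex 0 (-t)) (Complex 0 t) = (\<lambda>y. Complex 0 y) ` {-t..t}"
proof -
  have e: "Complex 0 (-t) = (-t) *\<^sub>R \<i>" "Complex 0 t = t *\<^sub>R \<i>" by (simp_all add: complex_eq_iff)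
  have "closed_segment (Complex 0 (-t)) (Complex 0 t) = closed_segment ((-t) *\<^sub>R \<i>) (t *\<^sub>R \<i>)"
    by (simp only: e)
  also have "\<dots> = (\<lambda>y. y *\<^sub>R \<i>) ` closed_segment (-t) t"
  proof -
    have "linear (\<lambda>y::real. y *\<^sub>R \<i>)" by (rule linear_scaleR_left)
    from closed_segment_linear_image[OF this, of "-t" t] show ?thesis by simp
  qed
  also have "closed_segment (-t) t = {-t..t}" using assms by (simp add: closed_segment_eq_real_ivl)
  also have "(\<lambda>y. y *\<^sub>R \<i>) = (\<lambda>y. Complex 0 y)" by (auto simp: complex_eq_iff)
  finally show ?thesis .
qed

lemma axis_segment_in_quad:
  assumes ab: "a > 0" "b > 0" "a\<^sup>2 + b\<^sup>2 < 1"
  shows "closed_segment (Complex 0 (- side_param a b)) (Complex 0 (side_param a b)) \<subseteq> quad a b"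
proof
  define t where "t = side_param a b"
  define s where "s = side_param b a"
  have t: "0 < t" "t < 1" using side_param[OF ab] by (auto simp: t_def)
  have s: "0 < s" using side_param[of b a] ab by (auto simp: s_def)
  have ends: "Complex 0 (-t) \<in> quad_boundary a b" "Complex 0 t \<in> quad_boundary a b"
    using lower_arc_midpoint[OF ab] upper_arc_midpoint[OF ab] unfolding quad_boundary_eq[OF ab] t_def
    by blast+
  fix z assume "z \<in> closed_segment (Complex 0 (- side_param a b)) (Complex 0 (side_param a b))"
  then obtain y where y: "y \<in> {-t..t}" "z = Complex 0 y" using axis_segment_eq[OF t(1)] by (auto simp: t_def)
  show "z \<in> quad a b"
  proof (cases "y = t \<or> y = -t")
    case True thus ?thesis using ends y by (auto simp: quad_def)
  next
    case False
    hence yl: "-t < y" "y < t" using y by auto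
    have ty: "1 + t * y > 0" "1 - t * y > 0"
      using yl t by (smt (verit) mult_less_cancel_left1 mult_pos_pos mult_minus_right)+
    have "side_circle t z = (y + t) * (1 + t * y)" "side_circle t (-z) = (t - y) * (1 - t * y)"
      using y by (simp_all add: side_circle_def cmod_def power2_eq_square algebra_simps)
    moreover have "side_circle s (- \<i> * z) > 0" "side_circle s (\<i> * z) > 0"
      using y s by (simp_all add: side_circle_def norm_mult cmod_def add_pos_nonneg)
    moreover have "cmod z < 1" using y yl t by (simp add: cmod_def)
    ultimately have "z \<in> quad_core a b" using yl ty by (simp add: quad_core_def t_def s_def)
    thus ?thesis using quad_core_inside[OF ab] by (simp add: quad_def)
  qed
qed

lemma side_point_defects:
  "1 + (cmod (side_point t w))\<^sup>2 = (1 + t\<^sup>2) * (1 + w\<^sup>2) / (1 + t\<^sup>2 * w\<^sup>2)"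
  "1 - (cmod (side_point t w))\<^sup>2 = (1 - t\<^sup>2) * (1 - w\<^sup>2) / (1 + t\<^sup>2 * w\<^sup>2)"
  using side_denom_pos[of t w] unfolding side_point_norm2 by (simp_all add: field_simps)

lemma side_points_inner:
  assumes D: "1 + t\<^sup>2 * u\<^sup>2 \<noteq> 0" "1 + t\<^sup>2 * v\<^sup>2 \<noteq> 0"
  shows "Re (side_point t u) * Re (- side_point t v) + Im (side_point t u) * Im (- side_point t v) =
     - ((u * v * (1 - t\<^sup>2)\<^sup>2 + t\<^sup>2 * (1 + u\<^sup>2) * (1 + v\<^sup>2)) / ((1 + t\<^sup>2 * u\<^sup>2) * (1 + t\<^sup>2 * v\<^sup>2)))"
proof -
  have r: "Re (side_point t w) = w * (1 - t\<^sup>2) / (1 + t\<^sup>2 * w\<^sup>2)"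
    "Im (side_point t w) = - t * (1 + w\<^sup>2) / (1 + t\<^sup>2 * w\<^sup>2)" for w
    by (simp_all add: side_point_coords)
  have prod: "p / D1 * (- (q / D2)) + r / D1 * (- (s / D2)) = - ((p * q + r * s) / (D1 * D2))"
    if "D1 \<noteq> 0" "D2 \<noteq> 0" for p q r s D1 D2 :: real
    using that by (simp add: field_simps)
  have "u * (1 - t\<^sup>2) * (v * (1 - t\<^sup>2)) + (- t * (1 + u\<^sup>2)) * (- t * (1 + v\<^sup>2))
      = u * v * (1 - t\<^sup>2)\<^sup>2 + t\<^sup>2 * (1 + u\<^sup>2) * (1 + v\<^sup>2)"
    by (simp add: power2_eq_square algebra_simps)
  thus ?thesis unfolding uminus_complex.sel r prod[OF D] by simp
qed

lemma lower_upper_cosh: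
  assumes "\<bar>t\<bar> < 1" "\<bar>u\<bar> < 1" "\<bar>v\<bar> < 1"
  shows "1 + pp (side_point t u) (- side_point t v) =
    ((1 + 6 * t\<^sup>2 + t^4) * (1 + u\<^sup>2) * (1 + v\<^sup>2) + 4 * u * v * (1 - t\<^sup>2)\<^sup>2)
      / ((1 - t\<^sup>2)\<^sup>2 * (1 - u\<^sup>2) * (1 - v\<^sup>2))"
proof -
  have D: "1 + t\<^sup>2 * u\<^sup>2 \<noteq> 0" "1 + t\<^sup>2 * v\<^sup>2 \<noteq> 0" using side_denom_pos[of t u] side_denom_pos[of t v] by auto
  have sq: "t\<^sup>2 < 1" "u\<^sup>2 < 1" "v\<^sup>2 < 1" using assms by (simp_all add: abs_square_less_1)
  have R: "(1 - t\<^sup>2) * (1 - u\<^sup>2) \<noteq> 0" "(1 - t\<^sup>2) * (1 - v\<^sup>2) \<noteq> 0" using sq by auto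
  have cu: "cmod (side_point t u) < 1" "cmod (- side_point t v) < 1"
    using side_point_in_disc assms by auto
  have combine: "((P1 / D1) * (P2 / D2) - 4 * (- (Q / (D1 * D2)))) / ((R1 / D1) * (R2 / D2))
      = (P1 * P2 + 4 * Q) / (R1 * R2)"
    if "D1 \<noteq> 0" "D2 \<noteq> 0" "R1 \<noteq> 0" "R2 \<noteq> 0" for P1 P2 R1 R2 Q D1 D2 :: real
    using that by (simp add: field_simps)
  have "1 + pp (side_point t u) (- side_point t v)
      = ((1 + (cmod (side_point t u))\<^sup>2) * (1 + (cmod (side_point t v))\<^sup>2)
          - 4 * (Re (side_point t u) * Re (- side_point t v) + Im (side_point t u) * Im (- side_point t v)))
        / ((1 - (cmod (side_point t u))\<^sup>2) * (1 - (cmod (side_point t v))\<^sup>2))"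
    using one_plus_pp[OF cu] by simp
  also have "\<dots> = (((1 + t\<^sup>2) * (1 + u\<^sup>2)) * ((1 + t\<^sup>2) * (1 + v\<^sup>2)) + 4 * (u * v * (1 - t\<^sup>2)\<^sup>2 + t\<^sup>2 * (1 + u\<^sup>2) * (1 + v\<^sup>2)))
        / (((1 - t\<^sup>2) * (1 - u\<^sup>2)) * ((1 - t\<^sup>2) * (1 - v\<^sup>2)))"
    unfolding side_point_defects side_points_inner[OF D] by (rule combine[OF D R])
  also have "((1 + t\<^sup>2) * (1 + u\<^sup>2)) * ((1 + t\<^sup>2) * (1 + v\<^sup>2)) + 4 * (u * v * (1 - t\<^sup>2)\<^sup>2 + t\<^sup>2 * (1 + u\<^sup>2) * (1 + v\<^sup>2))
      = (1 + 6 * t\<^sup>2 + t^4) * (1 + u\<^sup>2) * (1 + v\<^sup>2) + 4 * u * v * (1 - t\<^sup>2)\<^sup>2"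
    by (simp add: power2_eq_square power4_eq_xxxx algebra_simps)
  also have "((1 - t\<^sup>2) * (1 - u\<^sup>2)) * ((1 - t\<^sup>2) * (1 - v\<^sup>2)) = (1 - t\<^sup>2)\<^sup>2 * (1 - u\<^sup>2) * (1 - v\<^sup>2)"
    by (simp add: power2_eq_square algebra_simps)
  finally show ?thesis .
qed

(* That function is minimal exactly at u = v = 0: with C = 1 + 6t\<^sup>2 + t\<^sup>4 and E = (1 - t\<^sup>2)\<^sup>2,
   the numerator exceeds C (1 - u\<^sup>2)(1 - v\<^sup>2) by 2 (C - E)(u\<^sup>2 + v\<^sup>2) + 2 E (u + v)\<^sup>2. *)
lemma lower_upper_cosh_min:
  assumes "0 < t" "t < 1" "\<bar>u\<bar> < 1" "\<bar>v\<bar> < 1"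
  shows "1 + pp (side_point t 0) (- side_point t 0) \<le> 1 + pp (side_point t u) (- side_point t v)"
    and "u \<noteq> 0 \<or> v \<noteq> 0 \<Longrightarrow>
      1 + pp (side_point t 0) (- side_point t 0) < 1 + pp (side_point t u) (- side_point t v)"
proof -
  define C where "C = 1 + 6 * t\<^sup>2 + t^4"
  define E where "E = (1 - t\<^sup>2)\<^sup>2"
  define N where "N = E * (1 - u\<^sup>2) * (1 - v\<^sup>2)"
  have sq: "t\<^sup>2 < 1" "u\<^sup>2 < 1" "v\<^sup>2 < 1" using assms by (simp_all add: abs_square_less_1)
  have E0: "E > 0" and N0: "N > 0" using sq by (simp_all add: E_def N_def)
  have CE: "C - E = 8 * t\<^sup>2" by (simp add: C_def E_def power2_eq_square power4_eq_xxxx algebra_simps)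
  have at0: "1 + pp (side_point t 0) (- side_point t 0) = C * (1 - u\<^sup>2) * (1 - v\<^sup>2) / N"
    using lower_upper_cosh[of t 0 0] assms sq by (simp add: C_def E_def N_def)
  have at_uv: "1 + pp (side_point t u) (- side_point t v) = (C * (1 + u\<^sup>2) * (1 + v\<^sup>2) + 4 * u * v * E) / N"
    using lower_upper_cosh[of t u v] assms by (simp add: C_def E_def N_def mult.assoc)
  have excess: "C * (1 + u\<^sup>2) * (1 + v\<^sup>2) + 4 * u * v * E - C * (1 - u\<^sup>2) * (1 - v\<^sup>2)
      = 2 * (C - E) * (u\<^sup>2 + v\<^sup>2) + E * (2 * (u + v)\<^sup>2)"
    by (simp add: power2_eq_square algebra_simps)
  have "C * (1 - u\<^sup>2) * (1 - v\<^sup>2) \<le> C * (1 + u\<^sup>2) * (1 + v\<^sup>2) + 4 * u * v * E"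
    using excess CE E0 by (smt (verit) mult_nonneg_nonneg zero_le_power2)
  thus "1 + pp (side_point t 0) (- side_point t 0) \<le> 1 + pp (side_point t u) (- side_point t v)"
    unfolding at0 at_uv using N0 by (simp add: divide_right_mono)
  assume "u \<noteq> 0 \<or> v \<noteq> 0"
  hence "u\<^sup>2 + v\<^sup>2 > 0" by (metis add_nonneg_pos add_pos_nonneg zero_le_power2 zero_less_power2)
  moreover have "t\<^sup>2 > 0" using assms by simp
  ultimately have "C * (1 - u\<^sup>2) * (1 - v\<^sup>2) < C * (1 + u\<^sup>2) * (1 + v\<^sup>2) + 4 * u * v * E"
    using excess CE E0 by (smt (verit) mult_pos_pos mult_nonneg_nonneg zero_le_power2)
  thus "1 + pp (side_point t 0) (- side_point t 0) < 1 + pp (side_point t u) (- side_point t v)"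
    unfolding at0 at_uv using N0 by (simp add: divide_strict_right_mono)
qed

lemma lower_upper_distance:
  assumes ab: "a > 0" "b > 0" "a\<^sup>2 + b\<^sup>2 < 1"
    and x: "x \<in> lower_arc a b" and y: "y \<in> uminus ` lower_arc a b"
  shows "pdist (Complex 0 (- side_param a b)) (Complex 0 (side_param a b)) \<le> pdist x y"
    and "pdist x y \<le> pdist (Complex 0 (- side_param a b)) (Complex 0 (side_param a b))
           \<Longrightarrow> x = Complex 0 (- side_param a b) \<and> y = Complex 0 (side_param a b)"
proof -
  define t where "t = side_param a b"
  define \<sigma> where "\<sigma> = side_halfwidth a b"
  have t: "0 < t" "t < 1" using side_param[OF ab] by (simp_all add: t_def)
  have sg: "\<sigma> < 1" using lower_corners[OF ab] by (simp add: \<sigma>_def)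
  obtain u where u: "u \<in> {-\<sigma>..\<sigma>}" "x = side_point t u" using x by (auto simp: lower_arc_def t_def \<sigma>_def)
  obtain v where v: "v \<in> {-\<sigma>..\<sigma>}" "y = - side_point t v" using y by (auto simp: lower_arc_def t_def \<sigma>_def)
  have uv: "\<bar>u\<bar> < 1" "\<bar>v\<bar> < 1" using u v sg by auto
  have mids: "Complex 0 (-t) = side_point t 0" "Complex 0 t = - side_point t 0"
    by (simp_all add: side_point_0 complex_eq_iff)
  have pn: "pp (side_point t 0) (- side_point t 0) \<ge> 0"
    using t side_point_in_disc[of t 0] by (intro pp_nonneg) auto
  show "pdist (Complex 0 (- side_param a b)) (Complex 0 (side_param a b)) \<le> pdist x y"
    unfolding t_def[symmetric] mids u v pdist_def
    using lower_upper_cosh_min(1)[OF t uv] pn by (intro arcosh_mono) auto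
  assume le: "pdist x y \<le> pdist (Complex 0 (- side_param a b)) (Complex 0 (side_param a b))"
  have "u = 0 \<and> v = 0"
  proof (rule ccontr)
    assume "\<not> (u = 0 \<and> v = 0)"
    hence "arcosh (1 + pp (side_point t 0) (- side_point t 0)) < arcosh (1 + pp (side_point t u) (- side_point t v))"
      using lower_upper_cosh_min(2)[OF t uv] pn by (subst arcosh_less_iff_real) auto
    thus False using le unfolding t_def[symmetric] mids u v pdist_def by simp
  qed
  thus "x = Complex 0 (- side_param a b) \<and> y = Complex 0 (side_param a b)"
    using u v mids by (simp add: t_def)
qed

lemma hlength_ge_polygon:
  "sorted ts \<Longrightarrow> set ts \<subseteq> {0..1} \<Longrightarrow>
     ereal (sum_list (map2 (\<lambda>s t. pdist (g s) (g t)) ts (tl ts))) \<le> hlength g"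
  unfolding hlength_def by (rule SUP_upper) auto

lemma hlength_ge_chord: "ereal (pdist (g 0) (g 1)) \<le> hlength g"
  using hlength_ge_polygon[of "[0, 1]" g] by simp

lemma hlength_ge_via: "s \<in> {0..1} \<Longrightarrow> ereal (pdist (g 0) (g s) + pdist (g s) (g 1)) \<le> hlength g"
  using hlength_ge_polygon[of "[0, s, 1]" g] by simp

lemma sum_list_telescope:
  assumes "sorted ts" "set ts \<subseteq> A" "ts \<noteq> []"
    and "\<And>x y. x \<in> A \<Longrightarrow> y \<in> A \<Longrightarrow> x \<le> y \<Longrightarrow> P x y = \<Phi> y - \<Phi> x"
  shows "sum_list (map2 P ts (tl ts)) = \<Phi> (last ts) - (\<Phi> (hd ts) :: real)"
  using assms(1-3)
proof (induction ts rule: induct_list012)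
  case (3 x y zs)
  thus ?case using assms(4)[of x y] by simp
qed simp_all

(* A path along which distances are increments of a monotone function \<Phi> has length
   \<Phi> 1 - \<Phi> 0: every inscribed polygon telescopes. *)
lemma hlength_monotone_param:
  assumes mono: "\<And>x y. x \<in> {0..1} \<Longrightarrow> y \<in> {0..1} \<Longrightarrow> x \<le> y \<Longrightarrow> \<Phi> x \<le> \<Phi> y"
    and dist: "\<And>x y. x \<in> {0..1} \<Longrightarrow> y \<in> {0..1} \<Longrightarrow> x \<le> y \<Longrightarrow> pdist (g x) (g y) = \<Phi> y - \<Phi> x"
  shows "hlength g = ereal (\<Phi> 1 - \<Phi> 0)"
proof (rule antisym)
  show "hlength g \<le> ereal (\<Phi> 1 - \<Phi> 0)"
    unfolding hlength_def
  proof (rule SUP_least)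
    fix ts :: "real list" assume ts: "ts \<in> {ts. sorted ts \<and> set ts \<subseteq> {0..1}}"
    show "ereal (sum_list (map2 (\<lambda>s t. pdist (g s) (g t)) ts (tl ts))) \<le> ereal (\<Phi> 1 - \<Phi> 0)"
    proof (cases "ts = []")
      case True thus ?thesis using mono[of 0 1] by simp
    next
      case False
      have "hd ts \<in> set ts" "last ts \<in> set ts" using False by simp_all
      hence "hd ts \<in> {0..1}" "last ts \<in> {0..1}" using ts by auto
      hence "\<Phi> 0 \<le> \<Phi> (hd ts)" "\<Phi> (last ts) \<le> \<Phi> 1" using mono by auto
      moreover have "sum_list (map2 (\<lambda>s t. pdist (g s) (g t)) ts (tl ts)) = \<Phi> (last ts) - \<Phi> (hd ts)"
        using ts False dist by (intro sum_list_telescope[where A = "{0..1}"]) auto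
      ultimately show ?thesis by simp
    qed
  qed
  show "ereal (\<Phi> 1 - \<Phi> 0) \<le> hlength g"
    using hlength_ge_chord[of g] dist[of 0 1] by simp
qed

definition axis_length :: "real \<Rightarrow> real \<Rightarrow> real" where
  "axis_length a b = pdist (Complex 0 (- side_param a b)) (Complex 0 (side_param a b))"

lemma axis_path:
  assumes ab: "a > 0" "b > 0" "a\<^sup>2 + b\<^sup>2 < 1"
  defines "g \<equiv> linepath (Complex 0 (- side_param a b)) (Complex 0 (side_param a b))"
  shows "LU_path a b g" "hlength g = ereal (axis_length a b)"
proof -
  define t where "t = side_param a b"
  have t: "0 < t" "t < 1" using side_param[OF ab] by (auto simp: t_def)
  show "LU_path a b g"
    unfolding LU_path_def g_def lower_side_eq[OF ab] upper_side_eq[OF ab]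
    using axis_segment_in_quad[OF ab] lower_arc_midpoint[OF ab] upper_arc_midpoint[OF ab] by simp
  define \<Phi> where "\<Phi> = (\<lambda>s. hrad ((1 - s) * (-t) + s * t))"
  have gs: "g s = Complex 0 ((1 - s) * (-t) + s * t)" for s
    by (simp add: g_def linepath_def t_def complex_eq_iff)
  have inside: "\<bar>(1 - s) * (-t) + s * t\<bar> < 1" if "s \<in> {0..1}" for s
  proof -
    have "\<bar>(1 - s) * (-t) + s * t\<bar> \<le> t" using that t by (simp add: abs_le_iff algebra_simps)
    thus ?thesis using t by simp
  qed
  have mono: "\<Phi> x \<le> \<Phi> y" if "x \<in> {0..1}" "y \<in> {0..1}" "x \<le> y" for x y
  proof -
    have "(1 - x) * (-t) + x * t \<le> (1 - y) * (-t) + y * t"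
      using that t by (simp add: algebra_simps mult_right_mono)
    thus ?thesis unfolding \<Phi>_def using hrad_le_iff[OF inside inside] that by simp
  qed
  have "pdist (g x) (g y) = \<Phi> y - \<Phi> x" if "x \<in> {0..1}" "y \<in> {0..1}" "x \<le> y" for x y
    using mono[OF that] inside that unfolding gs \<Phi>_def by (simp add: pdist_imag)
  hence "hlength g = ereal (\<Phi> 1 - \<Phi> 0)" using mono by (intro hlength_monotone_param)
  moreover have "axis_length a b = \<Phi> 1 - \<Phi> 0"
    using t hrad_le_iff[of "-t" t] unfolding axis_length_def t_def[symmetric] \<Phi>_def
    by (simp add: pdist_imag)
  ultimately show "hlength g = ereal (axis_length a b)" by simp
qed

lemma LU_path_ends:
  assumes ab: "a > 0" "b > 0" "a\<^sup>2 + b\<^sup>2 < 1" and g: "LU_path a b g"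
  shows "g 0 \<in> lower_arc a b" "g 1 \<in> uminus ` lower_arc a b"
  using g unfolding LU_path_def lower_side_eq[OF ab] upper_side_eq[OF ab] pathstart_def pathfinish_def
  by auto

lemma LU_path_length_ge:
  assumes ab: "a > 0" "b > 0" "a\<^sup>2 + b\<^sup>2 < 1" and g: "LU_path a b g"
  shows "ereal (axis_length a b) \<le> hlength g"
  using lower_upper_distance(1)[OF ab LU_path_ends[OF ab g]] hlength_ge_chord[of g]
  by (simp add: axis_length_def) (meson ereal_less_eq(3) order_trans)

(* A path of minimal length runs from -i t to i t and stays on the axis segment, by the
   equality case of the triangle inequality. *)
lemma shortest_path_on_axis:
  assumes ab: "a > 0" "b > 0" "a\<^sup>2 + b\<^sup>2 < 1" and g: "LU_path a b g"
    and le: "hlength g \<le> ereal (axis_length a b)"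
  shows "g 0 = Complex 0 (- side_param a b)" "g 1 = Complex 0 (side_param a b)"
    "path_image g \<subseteq> closed_segment (Complex 0 (- side_param a b)) (Complex 0 (side_param a b))"
proof -
  define t where "t = side_param a b"
  have t: "0 < t" "t < 1" using side_param[OF ab] by (auto simp: t_def)
  have "ereal (pdist (g 0) (g 1)) \<le> ereal (axis_length a b)" using hlength_ge_chord[of g] le by (rule order_trans)
  thus ends: "g 0 = Complex 0 (- side_param a b)" "g 1 = Complex 0 (side_param a b)"
    using lower_upper_distance(2)[OF ab LU_path_ends[OF ab g]] by (auto simp: axis_length_def)
  show "path_image g \<subseteq> closed_segment (Complex 0 (- side_param a b)) (Complex 0 (side_param a b))"
  proof
    fix z assume z: "z \<in> path_image g"
    then obtain s where s: "s \<in> {0..1}" "z = g s" by (auto simp: path_image_def)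
    have zc: "cmod z < 1" using g quad_in_disc z by (auto simp: LU_path_def pdisc_def)
    have "ereal (pdist (g 0) (g s) + pdist (g s) (g 1)) \<le> ereal (axis_length a b)"
      using hlength_ge_via[OF s(1), of g] le by (rule order_trans)
    hence "pdist (Complex 0 (-t)) z + pdist z (Complex 0 t) \<le> pdist (Complex 0 (-t)) (Complex 0 t)"
      using ends s by (simp add: axis_length_def t_def)
    hence "Re z = 0 \<and> -t \<le> Im z \<and> Im z \<le> t" using triangle_equality_imag[OF t zc] by simp
    thus "z \<in> closed_segment (Complex 0 (- side_param a b)) (Complex 0 (side_param a b))"
      unfolding axis_segment_eq[OF t(1)] t_def[symmetric]
      by (auto simp: image_iff complex_eq_iff intro!: bexI[of _ "Im z"])
  qed
qed

(* ... and it covers the whole segment, since the imaginary parts along a path form an interval. *)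
lemma shortest_path_image:
  assumes ab: "a > 0" "b > 0" "a\<^sup>2 + b\<^sup>2 < 1" and g: "LU_path a b g"
    and le: "hlength g \<le> ereal (axis_length a b)"
  shows "path_image g = closed_segment (Complex 0 (- side_param a b)) (Complex 0 (side_param a b))"
proof -
  define t where "t = side_param a b"
  have t: "0 < t" using side_param[OF ab] by (auto simp: t_def)
  note on_axis = shortest_path_on_axis[OF ab g le, folded t_def]
  have "(\<lambda>y. Complex 0 y) ` {-t..t} \<subseteq> path_image g"
  proof
    fix w assume "w \<in> (\<lambda>y. Complex 0 y) ` {-t..t}"
    then obtain y where y: "y \<in> {-t..t}" "w = Complex 0 y" by blast
    have "connected (Im ` path_image g)"
      using g by (intro connected_continuous_image connected_path_image continuous_intros) (auto simp: LU_path_def)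
    moreover have "Complex 0 (-t) \<in> path_image g" "Complex 0 t \<in> path_image g"
      using on_axis(1,2) pathstart_in_path_image[of g] pathfinish_in_path_image[of g]
      by (auto simp: pathstart_def pathfinish_def)
    hence "-t \<in> Im ` path_image g" "t \<in> Im ` path_image g" by (metis complex.sel(2) image_eqI)+
    ultimately have "{-t..t} \<subseteq> Im ` path_image g" by (rule connected_contains_Icc)
    then obtain z where z: "z \<in> path_image g" "Im z = y" using y by blast
    have "Re z = 0" using on_axis(3) z(1) axis_segment_eq[OF t] by auto
    thus "w \<in> path_image g" using z y by (metis complex_surj)
  qed
  thus ?thesis using on_axis(3) axis_segment_eq[OF t] by (simp add: t_def)
qed

lemma vertical_side_Re_nonzero:
  assumes "a > 0" "b > 0" "a\<^sup>2 + b\<^sup>2 < 1"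
    and "z \<in> (\<lambda>z. \<i> * z) ` lower_arc b a \<union> (\<lambda>z. - \<i> * z) ` lower_arc b a"
  shows "Re z \<noteq> 0"
proof -
  have s: "side_param b a > 0" using side_param[of b a] assms by auto
  obtain u where "z = \<i> * side_point (side_param b a) u \<or> z = - \<i> * side_point (side_param b a) u"
    using assms(4) by (auto simp: lower_arc_def)
  thus ?thesis using side_point_Im_neg[OF s, of u] by auto
qed

(* A detour through a vertical side is strictly longer than the axis segment: otherwise
   equality in the triangle inequality would put the side point on the axis. *)
lemma detour_longer:
  assumes ab: "a > 0" "b > 0" "a\<^sup>2 + b\<^sup>2 < 1"
    and x: "x \<in> lower_arc a b" and y: "y \<in> uminus ` lower_arc a b"
    and z: "z \<in> (\<lambda>z. \<i> * z) ` lower_arc b a \<union> (\<lambda>z. - \<i> * z) ` lower_arc b a"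
  shows "axis_length a b < pdist x z + pdist z y"
proof (rule ccontr)
  assume le: "\<not> axis_length a b < pdist x z + pdist z y"
  define t where "t = side_param a b"
  have t: "0 < t" "t < 1" using side_param[OF ab] by (auto simp: t_def)
  have "lower_arc b a \<subseteq> pdisc" using lower_arc_in_disc[of b a] ab by auto
  hence disc: "cmod x < 1" "cmod z < 1" "cmod y < 1"
    using x y z lower_arc_in_disc[OF ab] by (auto simp: pdisc_def norm_mult)
  have "pdist x y \<le> axis_length a b" using pdist_triangle[OF disc(1,2,3)] le by simp
  hence "x = Complex 0 (-t)" "y = Complex 0 t"
    using lower_upper_distance(2)[OF ab x y] by (auto simp: axis_length_def t_def)
  hence "Re z = 0" using le triangle_equality_imag[OF t disc(2)] by (simp add: axis_length_def t_def)
  thus False using vertical_side_Re_nonzero[OF ab z] by simp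
qed

lemma detour_continuous:
  assumes "A \<subseteq> pdisc" "B \<subseteq> pdisc" "C \<subseteq> pdisc"
  shows "continuous_on (A \<times> B \<times> C) (\<lambda>p. pdist (fst p) (fst (snd p)) + pdist (fst (snd p)) (snd (snd p)))"
proof -
  let ?K = "A \<times> B \<times> C"
  have i1: "(\<lambda>p. (fst p, fst (snd p))) ` ?K \<subseteq> pdisc \<times> pdisc"
    and i2: "(\<lambda>p. (fst (snd p), snd (snd p))) ` ?K \<subseteq> pdisc \<times> pdisc" using assms by auto
  have k1: "continuous_on ?K (\<lambda>p. (fst p, fst (snd p)))"
    and k2: "continuous_on ?K (\<lambda>p. (fst (snd p), snd (snd p)))"
    by (intro continuous_intros)+
  have "continuous_on ?K (\<lambda>p. pdist (fst p) (fst (snd p)))"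
    "continuous_on ?K (\<lambda>p. pdist (fst (snd p)) (snd (snd p)))"
    using continuous_on_compose2[OF pdist_continuous k1 i1] continuous_on_compose2[OF pdist_continuous k2 i2]
    by simp_all
  thus ?thesis by (intro continuous_intros)
qed

(* By compactness of L \<times> (left \<union> right) \<times> U the excess is bounded below by some \<alpha> > 0. *)
lemma detour_gap:
  assumes ab: "a > 0" "b > 0" "a\<^sup>2 + b\<^sup>2 < 1"
  shows "\<exists>\<alpha> > 0. \<forall>x \<in> lower_arc a b. \<forall>y \<in> uminus ` lower_arc a b.
           \<forall>z \<in> (\<lambda>z. \<i> * z) ` lower_arc b a \<union> (\<lambda>z. - \<i> * z) ` lower_arc b a.
             axis_length a b + \<alpha> \<le> pdist x z + pdist z y"
proof -
  have ba: "b > 0" "a > 0" "b\<^sup>2 + a\<^sup>2 < 1" using ab by auto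
  define L where "L = lower_arc a b"
  define U where "U = uminus ` lower_arc a b"
  define M where "M = (\<lambda>z. \<i> * z) ` lower_arc b a \<union> (\<lambda>z. - \<i> * z) ` lower_arc b a"
  define K where "K = L \<times> M \<times> U"
  define F where "F = (\<lambda>p::complex \<times> complex \<times> complex.
    pdist (fst p) (fst (snd p)) + pdist (fst (snd p)) (snd (snd p)))"
  have "compact L" "compact U" "compact M"
    unfolding L_def U_def M_def using lower_arc_compact[OF ab] lower_arc_compact[OF ba]
    by (auto intro!: compact_continuous_image continuous_intros compact_negations)
  hence cK: "compact K" unfolding K_def by (intro compact_Times)
  have "L \<subseteq> pdisc" "M \<subseteq> pdisc" "U \<subseteq> pdisc"
    using lower_arc_in_disc[OF ab] lower_arc_in_disc[OF ba]
    by (auto simp: L_def U_def M_def pdisc_def norm_mult)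
  hence cF: "continuous_on K F" unfolding K_def F_def by (rule detour_continuous)
  have "K \<noteq> {}"
    using lower_arc_midpoint[OF ab] lower_arc_midpoint[OF ba] by (auto simp: K_def L_def M_def U_def)
  then obtain m where m: "m \<in> K" "\<And>k. k \<in> K \<Longrightarrow> F m \<le> F k"
    using continuous_attains_inf[OF cK _ cF] by blast
  have "axis_length a b < F m"
    using m(1) detour_longer[OF ab] by (auto simp: K_def L_def M_def U_def F_def)
  moreover have "axis_length a b + (F m - axis_length a b) \<le> pdist x z + pdist z y"
    if "x \<in> L" "y \<in> U" "z \<in> M" for x y z
    using m(2)[of "(x, z, y)"] that by (simp add: K_def F_def)
  ultimately show ?thesis unfolding L_def U_def M_def by (intro exI[of _ "F m - axis_length a b"]) auto
qed

lemma detour_path_length: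
  assumes ab: "a > 0" "b > 0" "a\<^sup>2 + b\<^sup>2 < 1"
  shows "\<exists>\<alpha> > 0. \<forall>g. LU_path a b g \<and> path_image g \<inter> (left_side a b \<union> right_side a b) \<noteq> {}
           \<longrightarrow> hlength g \<ge> ereal (axis_length a b + \<alpha>)"
proof -
  obtain \<alpha> where \<alpha>: "\<alpha> > 0" "\<forall>x \<in> lower_arc a b. \<forall>y \<in> uminus ` lower_arc a b.
      \<forall>z \<in> (\<lambda>z. \<i> * z) ` lower_arc b a \<union> (\<lambda>z. - \<i> * z) ` lower_arc b a.
        axis_length a b + \<alpha> \<le> pdist x z + pdist z y"
    using detour_gap[OF ab] by blast
  have "hlength g \<ge> ereal (axis_length a b + \<alpha>)"
    if g: "LU_path a b g" and meets: "path_image g \<inter> (left_side a b \<union> right_side a b) \<noteq> {}" for g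
  proof -
    obtain s where s: "s \<in> {0..1}" "g s \<in> left_side a b \<union> right_side a b"
      using meets unfolding path_image_def by blast
    hence "g s \<in> (\<lambda>z. \<i> * z) ` lower_arc b a \<union> (\<lambda>z. - \<i> * z) ` lower_arc b a"
      using left_side_eq[OF ab] right_side_eq[OF ab] by auto
    hence "axis_length a b + \<alpha> \<le> pdist (g 0) (g s) + pdist (g s) (g 1)"
      using \<alpha>(2) LU_path_ends[OF ab g] by blast
    thus ?thesis using hlength_ge_via[OF s(1), of g] by (meson ereal_less_eq(3) order_trans)
  qed
  thus ?thesis using \<alpha>(1) by blast
qed

(* The main result.  The midpoint distance lam identifies the axis length. *)
theorem lemmaL1:
  fixes lam eps a b :: real
  assumes "lam > 0" and "eps > 0"
    and "a > 0" and "b > 0" and "a\<^sup>2 + b\<^sup>2 < 1"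
    and "pdist (hmid (Complex a b) (Complex (-a) b))
               (hmid (Complex a (-b)) (Complex (-a) (-b))) = lam"
    and "pdist (hmid (Complex (-a) (-b)) (Complex (-a) b))
               (hmid (Complex a (-b)) (Complex a b)) = eps"
  shows "(\<exists>g0. LU_path a b g0
            \<and> (\<exists>y1 y2. path_image g0 = closed_segment (Complex 0 y1) (Complex 0 y2))
            \<and> (\<forall>g. LU_path a b g \<longrightarrow> hlength g0 \<le> hlength g)
            \<and> (\<forall>g. LU_path a b g \<and> (\<forall>h. LU_path a b h \<longrightarrow> hlength g \<le> hlength h)
                   \<longrightarrow> path_image g = path_image g0))
       \<and> (\<exists>alpha > 0. \<forall>g. LU_path a b g
            \<and> path_image g \<inter> (left_side a b \<union> right_side a b) \<noteq> {}
            \<longrightarrow> hlength g \<ge> ereal (lam + alpha))"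
proof -
  have ab: "a > 0" "b > 0" "a\<^sup>2 + b\<^sup>2 < 1" using assms by auto
  have lam: "lam = axis_length a b"
    using assms(6) unfolding upper_hmid[OF ab] lower_hmid[OF ab] axis_length_def by (simp add: pdist_sym)
  define g0 where "g0 = linepath (Complex 0 (- side_param a b)) (Complex 0 (side_param a b))"
  note g0 = axis_path[OF ab, folded g0_def]
  have "path_image g0 = closed_segment (Complex 0 (- side_param a b)) (Complex 0 (side_param a b))"
    by (simp add: g0_def)
  moreover have "hlength g0 \<le> hlength g" if "LU_path a b g" for g
    using LU_path_length_ge[OF ab that] g0(2) by simp
  moreover have "path_image g = path_image g0"
    if "LU_path a b g" "\<forall>h. LU_path a b h \<longrightarrow> hlength g \<le> hlength h" for g
    using that shortest_path_image[OF ab] g0 calculation(1) by metis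
  ultimately show ?thesis using g0(1) detour_path_length[OF ab] unfolding lam by blast
qed

end
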